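(* Let $P=(V,V_\Diamond,E,\omega)$ be a partial parity game with interface $U$, let $v\in V$, and let $\pi$ be a partial winning strategy for $(P,v)$. Then there exists a positional partial winning strategy $\rho$ for $(P,v)$ such that $\mathrm{profile}(\rho,v)\sqsubseteq\mathrm{profile}(\pi,v)$.
   Context: **Parity games.** A parity game $(V,V_\Diamond,E,\omega)$ is a digraph $(V,E)$ with $V_\Diamond\subseteq V$ and priorities $\omega:V\to\mathbb N$. Player $\Diamond$ moves at nodes of $V_\Diamond$ and Player $\Box$ at the other nodes. A player who cannot move loses. An infinite play is won by $\Diamond$ iff the minimum priority occurring infinitely often is even. **Strategies.** For a partial function $\pi:V^+\to V$, a path $(v_1,\dots,v_n)$ is $\pi$-conforming if for all $i<n$ with $v_i\in V_\Diamond$ we have $(v_1,\dots,v_i)\in\mathrm{dom}(\pi)$ and $v_{i+1}=\pi(v_1,\dots,v_i)$, with $(v_i,v_{i+1})\in E$. An infinite path is $\pi$-conforming if all its finite prefixes are. **Partial parity games and partial strategies.** A partial parity game additionally has an interface $U\subseteq V$. A partial strategy for $(P,v_1)$ is a partial $\pi:V^+\to V$ such that: - for every $(v_1,\dots,v_n)\in\mathrm{dom}(\pi)$, the path $(v_1,\dots,v_n,\pi(v_1,\dots,v_n))$ is $\pi$-conforming and $v_n\in V_\Diamond$; - for every $\pi$-conforming path $(v_1,\dots,v_n)$ with $v_n\in V_\Diamond\setminus U$, we have $(v_1,\dots,v_n)\in\mathrm{dom}(\pi)$. $\pi$ is positional if $\pi(v_1,\dots,v_n)$ depends only on $v_n$.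 **Partial winning strategies.** $\pi$ is a partial winning strategy for $(P,v_1)$ if the following holds. Add to $P$ a new $\Box$-node $\top$ without successors and edges from every node of $V_\Diamond\cap U$ to $\top$, and extend $\pi$ by moving to $\top$ on $\pi$-conforming paths ending in $V_\Diamond\cap U$ where $\pi$ is undefined. Then every maximal conforming path from $v_1$ in the resulting game is won by $\Diamond$. **Reward ordering on priorities.** $p\sqsubseteq p'$ iff one of: - $p$ is even and $p'$ is odd; - both are even and $p\le p'$; - both are odd and $p\ge p'$. **Profiles.** For a partial winning strategy $\pi$ for $(P,v_1)$: - $\mathrm{preprofile}(\pi,v_1)=\{(v_n,\min_{1\le i\le n}\omega(v_i)) : n>1,\ (v_1,\dots,v_n)$ is a $\pi$-conforming path with $v_n\in U$ and $(v_1,\dots,v_n)\notin\mathrm{dom}(\pi)\}$; - $\mathrm{profile}(\pi,v_1)$ consists of the pairs $(u,p)\in\mathrm{preprofile}(\pi,v_1)$ with $p$ $\sqsubseteq$-maximal among pairs with first component $u$. For profiles $y,y'$, $y\sqsubseteq y'$ iff for every $(u,p)\in y$ there is $(u,p')\in y'$ with $p\sqsubseteq p'$. *)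

theory Defs
  imports Main
begin

(* A parity game is given by (V, Vd, E, omega): V the nodes, Vd the nodes of player Diamond,
   E the edge relation, omega the priority function. *)

definition conforming ::
  "'v set \<Rightarrow> 'v set \<Rightarrow> ('v \<times> 'v) set \<Rightarrow> ('v list \<Rightarrow> 'v option) \<Rightarrow> 'v list \<Rightarrow> bool" where
  "conforming V Vd E \<pi> p \<longleftrightarrow>
     p \<noteq> [] \<and> set p \<subseteq> V \<and>
     (\<forall>i. Suc i < length p \<longrightarrow>
        (p ! i, p ! Suc i) \<in> E \<and>
        (p ! i \<in> Vd \<longrightarrow> \<pi> (take (Suc i) p) = Some (p ! Suc i)))"

definition inf_conforming ::
  "'v set \<Rightarrow> 'v set \<Rightarrow> ('v \<times> 'v) set \<Rightarrow> ('v list \<Rightarrow> 'v option) \<Rightarrow> (nat \<Rightarrow> 'v) \<Rightarrow> bool" where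
  "inf_conforming V Vd E \<pi> f \<longleftrightarrow> (\<forall>n>0. conforming V Vd E \<pi> (map f [0..<n]))"

definition inf_won :: "('v \<Rightarrow> nat) \<Rightarrow> (nat \<Rightarrow> 'v) \<Rightarrow> bool" where
  "inf_won \<omega> f \<longleftrightarrow> even (LEAST q. \<exists>\<^sub>\<infinity>n. \<omega> (f n) = q)"

(* every maximal conforming play from v1 is won by Diamond.  A finite maximal play is
   lost by the owner of its last node (who cannot move): Diamond wins iff it ends in a
   Box node. *)
definition winning_from ::
  "'v set \<Rightarrow> 'v set \<Rightarrow> ('v \<times> 'v) set \<Rightarrow> ('v \<Rightarrow> nat) \<Rightarrow> ('v list \<Rightarrow> 'v option) \<Rightarrow> 'v \<Rightarrow> bool" where
  "winning_from V Vd E \<omega> \<pi> v1 \<longleftrightarrow>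
     (\<forall>p. conforming V Vd E \<pi> p \<and> hd p = v1 \<and>
          \<not> (\<exists>w. conforming V Vd E \<pi> (p @ [w])) \<longrightarrow> last p \<notin> Vd) \<and>
     (\<forall>f. inf_conforming V Vd E \<pi> f \<and> f 0 = v1 \<longrightarrow> inf_won \<omega> f)"

definition partial_strategy ::
  "'v set \<Rightarrow> 'v set \<Rightarrow> ('v \<times> 'v) set \<Rightarrow> 'v set \<Rightarrow> ('v list \<Rightarrow> 'v option) \<Rightarrow> 'v \<Rightarrow> bool" where
  "partial_strategy V Vd E U \<pi> v1 \<longleftrightarrow>
     (\<forall>p \<in> dom \<pi>. p \<noteq> [] \<and> hd p = v1 \<and>
        conforming V Vd E \<pi> (p @ [the (\<pi> p)]) \<and> last p \<in> Vd) \<and>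
     (\<forall>p. conforming V Vd E \<pi> p \<and> hd p = v1 \<and> last p \<in> Vd - U \<longrightarrow> p \<in> dom \<pi>)"

definition positional :: "('v list \<Rightarrow> 'v option) \<Rightarrow> bool" where
  "positional \<pi> \<longleftrightarrow> (\<forall>p \<in> dom \<pi>. \<forall>q \<in> dom \<pi>. last p = last q \<longrightarrow> \<pi> p = \<pi> q)"

(* The extended game: None plays the role of the new Box node top (no successors). *)
definition ext_V :: "'v set \<Rightarrow> 'v option set" where
  "ext_V V = Some ` V \<union> {None}"

definition ext_Vd :: "'v set \<Rightarrow> 'v option set" where
  "ext_Vd Vd = Some ` Vd"

definition ext_E :: "('v \<times> 'v) set \<Rightarrow> 'v set \<Rightarrow> 'v set \<Rightarrow> ('v option \<times> 'v option) set" where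
  "ext_E E Vd U = {(Some a, Some b) | a b. (a, b) \<in> E} \<union> {(Some u, None) | u. u \<in> Vd \<inter> U}"

(* priority of top is irrelevant (top has no successors); we choose 0 *)
definition ext_\<omega> :: "('v \<Rightarrow> nat) \<Rightarrow> 'v option \<Rightarrow> nat" where
  "ext_\<omega> \<omega> x = (case x of Some v \<Rightarrow> \<omega> v | None \<Rightarrow> 0)"

definition ext_strat ::
  "'v set \<Rightarrow> 'v set \<Rightarrow> ('v \<times> 'v) set \<Rightarrow> 'v set \<Rightarrow> ('v list \<Rightarrow> 'v option)
     \<Rightarrow> 'v option list \<Rightarrow> 'v option option" where
  "ext_strat V Vd E U \<pi> ps =
     (if None \<in> set ps then None
      else (let p = map the ps in
            case \<pi> p of
              Some w \<Rightarrow> Some (Some w)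
            | None \<Rightarrow> (if conforming V Vd E \<pi> p \<and> last p \<in> Vd \<inter> U then Some None else None)))"

definition partial_winning ::
  "'v set \<Rightarrow> 'v set \<Rightarrow> ('v \<times> 'v) set \<Rightarrow> ('v \<Rightarrow> nat) \<Rightarrow> 'v set \<Rightarrow> ('v list \<Rightarrow> 'v option) \<Rightarrow> 'v \<Rightarrow> bool" where
  "partial_winning V Vd E \<omega> U \<pi> v1 \<longleftrightarrow>
     partial_strategy V Vd E U \<pi> v1 \<and>
     winning_from (ext_V V) (ext_Vd Vd) (ext_E E Vd U) (ext_\<omega> \<omega>) (ext_strat V Vd E U \<pi>) (Some v1)"

definition rew_le :: "nat \<Rightarrow> nat \<Rightarrow> bool" where
  "rew_le p p' \<longleftrightarrow> (even p \<and> odd p') \<or> (even p \<and> even p' \<and> p \<le> p') \<or> (odd p \<and> odd p' \<and> p \<ge> p')"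

definition preprofile ::
  "'v set \<Rightarrow> 'v set \<Rightarrow> ('v \<times> 'v) set \<Rightarrow> ('v \<Rightarrow> nat) \<Rightarrow> 'v set \<Rightarrow> ('v list \<Rightarrow> 'v option) \<Rightarrow> 'v \<Rightarrow> ('v \<times> nat) set" where
  "preprofile V Vd E \<omega> U \<pi> v1 =
     {(last p, Min (\<omega> ` set p)) | p. length p > 1 \<and> conforming V Vd E \<pi> p \<and> hd p = v1 \<and>
                                     last p \<in> U \<and> p \<notin> dom \<pi>}"

definition profile ::
  "'v set \<Rightarrow> 'v set \<Rightarrow> ('v \<times> 'v) set \<Rightarrow> ('v \<Rightarrow> nat) \<Rightarrow> 'v set \<Rightarrow> ('v list \<Rightarrow> 'v option) \<Rightarrow> 'v \<Rightarrow> ('v \<times> nat) set" where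
  "profile V Vd E \<omega> U \<pi> v1 =
     {(u, q). (u, q) \<in> preprofile V Vd E \<omega> U \<pi> v1 \<and>
              \<not> (\<exists>q'. (u, q') \<in> preprofile V Vd E \<omega> U \<pi> v1 \<and> rew_le q q' \<and> q' \<noteq> q)}"

definition profile_le :: "('v \<times> nat) set \<Rightarrow> ('v \<times> nat) set \<Rightarrow> bool" where
  "profile_le y y' \<longleftrightarrow> (\<forall>(u, q) \<in> y. \<exists>q'. (u, q') \<in> y' \<and> rew_le q q')"

end

theory Submission
  imports Defs "HOL-Library.Infinite_Set"
begin

text \<open>The theorem is reduced to positional determinacy of a finite parity game, proved by
  Zielonka's recursion over attractors.  The auxiliary game is played on the nodes of the
  partial game; at an interface node \<open>u\<close> the player to move may in addition take an exit
  back to the start.  The exit carries a priority chosen so that a cycle through it is won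
  by \<open>\<Diamond>\<close> iff the least priority of the path leading to \<open>u\<close> is \<open>\<sqsubseteq>\<close> the best value of the
  profile of \<open>\<pi>\<close> at \<open>u\<close>; exits where \<open>\<pi>\<close> never stops lead to a sink losing for \<open>\<Diamond>\<close>.

  If \<open>\<Diamond>\<close> wins the auxiliary game from the start, her positional strategy restricted to
  the nodes of the partial game is the required \<open>\<rho>\<close>: every profile value of \<open>\<rho>\<close> closes a
  cycle won by \<open>\<Diamond>\<close>, hence is dominated by the profile of \<open>\<pi>\<close>.  If \<open>\<Box>\<close> won, \<open>\<pi>\<close> played
  against \<open>\<Box>\<close>'s positional strategy would produce either an infinite play won by \<open>\<pi>\<close>, or a
  history ending in a winning sink or in an exit whose cycle \<open>\<Diamond>\<close> wins, a contradiction.\<close>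

subsection \<open>Positional determinacy of finite parity games\<close>

lemma INFM_nat_shift: "(\<exists>\<^sub>\<infinity>n. P (n + k)) \<longleftrightarrow> (\<exists>\<^sub>\<infinity>n::nat. P n)"
  by (simp add: frequently_def cofinite_eq_sequentially eventually_sequentially_seg[of "\<lambda>n. \<not> P n"])

text \<open>Players are booleans: player \<open>True\<close> wins a play iff the least priority
  occurring infinitely often is even, and \<open>own x\<close> is the player moving at \<open>x\<close>.
  Games are restricted to a node set \<open>VV\<close>, so that subgames are just subsets.\<close>

locale parity_game =
  fixes R :: "'n \<Rightarrow> 'n set" and own :: "'n \<Rightarrow> bool" and pr :: "'n \<Rightarrow> nat"
begin

definition play :: "'n set \<Rightarrow> (nat \<Rightarrow> 'n) \<Rightarrow> bool" where
  "play VV f \<longleftrightarrow> (\<forall>n. f n \<in> VV \<and> f (Suc n) \<in> R (f n))"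

definition conforms :: "bool \<Rightarrow> ('n \<Rightarrow> 'n) \<Rightarrow> (nat \<Rightarrow> 'n) \<Rightarrow> bool" where
  "conforms i \<sigma> f \<longleftrightarrow> (\<forall>n. own (f n) = i \<longrightarrow> f (Suc n) = \<sigma> (f n))"

definition winning_play :: "bool \<Rightarrow> (nat \<Rightarrow> 'n) \<Rightarrow> bool" where
  "winning_play i f \<longleftrightarrow> (even (LEAST q. \<exists>\<^sub>\<infinity>n. pr (f n) = q) = i)"

definition wins_from :: "'n set \<Rightarrow> bool \<Rightarrow> ('n \<Rightarrow> 'n) \<Rightarrow> 'n \<Rightarrow> bool" where
  "wins_from VV i \<sigma> x \<longleftrightarrow> (\<forall>f. play VV f \<and> conforms i \<sigma> f \<and> f 0 = x \<longrightarrow> winning_play i f)"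

definition strategy :: "'n set \<Rightarrow> bool \<Rightarrow> ('n \<Rightarrow> 'n) \<Rightarrow> bool" where
  "strategy VV i \<sigma> \<longleftrightarrow> (\<forall>x\<in>VV. own x = i \<longrightarrow> \<sigma> x \<in> R x \<inter> VV)"

definition winning_strategies :: "'n set \<Rightarrow> (bool \<Rightarrow> 'n \<Rightarrow> 'n) \<Rightarrow> bool" where
  "winning_strategies VV \<sigma> \<longleftrightarrow> (\<forall>i. strategy VV i (\<sigma> i)) \<and> (\<forall>x\<in>VV. \<exists>i. wins_from VV i (\<sigma> i) x)"

lemma play_shift: "play VV f \<Longrightarrow> play VV (\<lambda>n. f (n + k))"
  unfolding play_def by simp

lemma conforms_shift: "conforms i \<sigma> f \<Longrightarrow> conforms i \<sigma> (\<lambda>n. f (n + k))"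
  unfolding conforms_def by simp

lemma winning_play_shift: "winning_play i (\<lambda>n. f (n + k)) \<longleftrightarrow> winning_play i f"
  unfolding winning_play_def using INFM_nat_shift[of "\<lambda>n. pr (f n) = _" k] by simp

lemma wins_from_suffix:
  assumes "wins_from VV i \<sigma> (f k)" "play VV f" "conforms i \<sigma> f"
  shows "winning_play i f"
proof -
  have "play VV (\<lambda>n. f (n + k))" "conforms i \<sigma> (\<lambda>n. f (n + k))"
    using play_shift[OF assms(2)] conforms_shift[OF assms(3)] by blast+
  then have "winning_play i (\<lambda>n. f (n + k))" using assms(1) unfolding wins_from_def by simp
  then show ?thesis by (simp add: winning_play_shift)
qed

lemma wins_from_step:
  assumes "wins_from VV i \<sigma> x" "x \<in> VV" "y \<in> R x" "own x = i \<longrightarrow> y = \<sigma> x"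
  shows "wins_from VV i \<sigma> y"
  unfolding wins_from_def
proof (intro allI impI)
  fix f assume f: "play VV f \<and> conforms i \<sigma> f \<and> f 0 = y"
  define g where "g n = (case n of 0 \<Rightarrow> x | Suc m \<Rightarrow> f m)" for n
  have "play VV g" using f assms(2,3) unfolding play_def g_def by (auto split: nat.split)
  moreover have "conforms i \<sigma> g" using f assms(4) unfolding conforms_def g_def
    by (auto split: nat.split)
  ultimately have "winning_play i g" using assms(1) unfolding wins_from_def g_def by simp
  then have "winning_play i (\<lambda>n. g (n + 1))" by (simp only: winning_play_shift)
  moreover have "(\<lambda>n. g (n + 1)) = f" by (simp add: g_def)
  ultimately show "winning_play i f" by simp
qed

lemma winning_play_min_recurring:
  assumes "\<exists>\<^sub>\<infinity>n. pr (f n) = m" "\<And>n. m \<le> pr (f n)"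
  shows "winning_play i f \<longleftrightarrow> even m = i"
proof -
  have "(LEAST q. \<exists>\<^sub>\<infinity>n. pr (f n) = q) = m"
  proof (rule Least_equality)
    fix q assume "\<exists>\<^sub>\<infinity>n. pr (f n) = q"
    then obtain n where "pr (f n) = q" using INFM_EX by blast
    then show "m \<le> q" using assms(2) by metis
  qed (fact assms(1))
  then show ?thesis unfolding winning_play_def by simp
qed

lemma least_recurring_periodic:
  assumes "cyc \<noteq> []"
  shows "(LEAST q. \<exists>\<^sub>\<infinity>n. pr (cyc ! (n mod length cyc)) = q) = Min (pr ` set cyc)"
proof -
  let ?L = "length cyc"
  have recurring: "(\<exists>\<^sub>\<infinity>n. pr (cyc ! (n mod ?L)) = q) \<longleftrightarrow> q \<in> pr ` set cyc" for q
  proof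
    assume "\<exists>\<^sub>\<infinity>n. pr (cyc ! (n mod ?L)) = q"
    then obtain n where "pr (cyc ! (n mod ?L)) = q" using INFM_EX by blast
    then show "q \<in> pr ` set cyc" using assms by auto
  next
    assume "q \<in> pr ` set cyc"
    then obtain j where j: "j < ?L" "pr (cyc ! j) = q" by (auto simp: in_set_conv_nth)
    show "\<exists>\<^sub>\<infinity>n. pr (cyc ! (n mod ?L)) = q" unfolding INFM_nat
    proof
      fix m
      have "(j + ?L * (m + 1)) mod ?L = j" using j(1)
        by (metis mod_less mod_mult_self2 mult.commute)
      moreover have "j + ?L * (m + 1) > m" using j by (cases ?L) auto
      ultimately show "\<exists>n>m. pr (cyc ! (n mod ?L)) = q" using j by metis
    qed
  qed
  show ?thesis
  proof (rule Least_equality)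
    show "\<exists>\<^sub>\<infinity>n. pr (cyc ! (n mod ?L)) = Min (pr ` set cyc)"
      using recurring assms by auto
  qed (use recurring in auto)
qed

lemma wins_from_cycle:
  assumes "wins_from VV i \<sigma> (hd cyc)" "cyc \<noteq> []" "set cyc \<subseteq> VV"
    and "\<And>j. j < length cyc \<Longrightarrow> cyc ! (Suc j mod length cyc) \<in> R (cyc ! j)"
    and "\<And>j. j < length cyc \<Longrightarrow> own (cyc ! j) = i \<Longrightarrow> cyc ! (Suc j mod length cyc) = \<sigma> (cyc ! j)"
  shows "even (Min (pr ` set cyc)) = i"
proof -
  let ?L = "length cyc"
  let ?f = "\<lambda>n. cyc ! (n mod ?L)"
  have cyc_step: "\<exists>j<?L. ?f n = cyc ! j \<and> ?f (Suc n) = cyc ! (Suc j mod ?L)" for n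
    using assms(2) by (intro exI[of _ "n mod ?L"]) (simp add: mod_Suc_eq)
  have "play VV ?f" unfolding play_def
  proof
    fix n
    obtain j where "j < ?L" "?f n = cyc ! j" "?f (Suc n) = cyc ! (Suc j mod ?L)"
      using cyc_step by blast
    then show "?f n \<in> VV \<and> ?f (Suc n) \<in> R (?f n)" using assms(3,4) by auto
  qed
  moreover have "conforms i \<sigma> ?f" unfolding conforms_def
    using cyc_step assms(5) by metis
  ultimately have "winning_play i ?f"
    using assms(1,2) unfolding wins_from_def by (simp add: hd_conv_nth)
  then show ?thesis unfolding winning_play_def using least_recurring_periodic[OF assms(2)] by simp
qed

lemma wins_from_self_loop:
  assumes "wins_from VV i \<sigma> x" "x \<in> VV" "y \<in> R x" "y \<in> VV" "own x = i \<longrightarrow> y = \<sigma> x"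
    "y \<in> R y" "own y = i \<longrightarrow> \<sigma> y = y"
  shows "even (pr y) = i"
  using wins_from_cycle[of VV i \<sigma> "[y]"] wins_from_step[OF assms(1-3,5)] assms(4,6,7) by simp

subsection \<open>Attractors\<close>

fun attractor_level :: "'n set \<Rightarrow> bool \<Rightarrow> 'n set \<Rightarrow> nat \<Rightarrow> 'n set" where
  "attractor_level VV i X 0 = X \<inter> VV"
| "attractor_level VV i X (Suc k) = attractor_level VV i X k \<union>
     {x \<in> VV. (own x = i \<and> (\<exists>y \<in> R x \<inter> VV. y \<in> attractor_level VV i X k)) \<or>
              (own x \<noteq> i \<and> (\<forall>y \<in> R x \<inter> VV. y \<in> attractor_level VV i X k))}"

definition attractor :: "'n set \<Rightarrow> bool \<Rightarrow> 'n set \<Rightarrow> 'n set" where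
  "attractor VV i X = (\<Union>k. attractor_level VV i X k)"

definition attractor_rank :: "'n set \<Rightarrow> bool \<Rightarrow> 'n set \<Rightarrow> 'n \<Rightarrow> nat" where
  "attractor_rank VV i X x = (LEAST k. x \<in> attractor_level VV i X k)"

definition attractor_strategy :: "'n set \<Rightarrow> bool \<Rightarrow> 'n set \<Rightarrow> 'n \<Rightarrow> 'n" where
  "attractor_strategy VV i X x =
     (SOME y. y \<in> R x \<inter> VV \<and> y \<in> attractor_level VV i X (attractor_rank VV i X x - 1))"

lemma attractor_level_mono: "k \<le> l \<Longrightarrow> attractor_level VV i X k \<subseteq> attractor_level VV i X l"
  by (induction l) (auto simp: le_Suc_eq)

lemma attractor_subset: "attractor VV i X \<subseteq> VV"
proof -
  have "attractor_level VV i X k \<subseteq> VV" for k by (induction k) auto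
  then show ?thesis unfolding attractor_def by blast
qed

lemma subset_attractor: "X \<inter> VV \<subseteq> attractor VV i X"
  unfolding attractor_def using attractor_level.simps(1) by blast

lemma attractor_closed_own:
  assumes "x \<in> VV" "own x = i" "y \<in> R x \<inter> VV" "y \<in> attractor VV i X"
  shows "x \<in> attractor VV i X"
proof -
  obtain k where "y \<in> attractor_level VV i X k" using assms(4) unfolding attractor_def by blast
  then have "x \<in> attractor_level VV i X (Suc k)" using assms by auto
  then show ?thesis unfolding attractor_def by blast
qed

lemma attractor_closed_other:
  assumes "finite VV" "x \<in> VV" "own x \<noteq> i" "R x \<inter> VV \<subseteq> attractor VV i X"
  shows "x \<in> attractor VV i X"
proof -
  have "\<forall>y \<in> R x \<inter> VV. \<exists>k. y \<in> attractor_level VV i X k"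
    using assms(4) unfolding attractor_def by blast
  then obtain kf where kf: "\<forall>y \<in> R x \<inter> VV. y \<in> attractor_level VV i X (kf y)" by metis
  define K where "K = Max (kf ` (R x \<inter> VV))"
  have "y \<in> attractor_level VV i X K" if "y \<in> R x \<inter> VV" for y
  proof -
    have "kf y \<le> K" unfolding K_def using that assms(1) by (intro Max_ge) auto
    then show ?thesis using kf that attractor_level_mono by blast
  qed
  then have "x \<in> attractor_level VV i X (Suc K)" using assms by auto
  then show ?thesis unfolding attractor_def by blast
qed

lemma attractor_complement_own:
  assumes "x \<in> VV - attractor VV i X" "own x = i"
  shows "R x \<inter> VV \<subseteq> VV - attractor VV i X"
  using attractor_closed_own[of x VV i] assms by blast

lemma attractor_complement_other:
  assumes "finite VV" "x \<in> VV - attractor VV i X" "own x \<noteq> i"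
  shows "\<exists>y \<in> R x \<inter> VV. y \<notin> attractor VV i X"
  using attractor_closed_other[of VV x i] assms by blast

lemma attractor_complement_no_dead_ends:
  assumes "finite VV" "\<forall>x\<in>VV. R x \<inter> VV \<noteq> {}"
  shows "\<forall>x\<in>VV - attractor VV i X. R x \<inter> (VV - attractor VV i X) \<noteq> {}"
proof
  fix x assume x: "x \<in> VV - attractor VV i X"
  show "R x \<inter> (VV - attractor VV i X) \<noteq> {}"
  proof (cases "own x = i")
    case True
    then show ?thesis using attractor_complement_own[OF x] assms(2) x by blast
  next
    case False
    then show ?thesis using attractor_complement_other[OF assms(1) x] by blast
  qed
qed

lemma attractor_rank_step:
  assumes "x \<in> attractor VV i X" "x \<notin> X"
  obtains k where "attractor_rank VV i X x = Suc k"
    "own x = i \<Longrightarrow> \<exists>y \<in> R x \<inter> VV. y \<in> attractor_level VV i X k"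
    "own x \<noteq> i \<Longrightarrow> \<forall>y \<in> R x \<inter> VV. y \<in> attractor_level VV i X k"
proof -
  obtain l where "x \<in> attractor_level VV i X l" using assms(1) unfolding attractor_def by blast
  then have in_rank: "x \<in> attractor_level VV i X (attractor_rank VV i X x)"
    unfolding attractor_rank_def by (rule LeastI)
  show ?thesis
  proof (cases "attractor_rank VV i X x")
    case 0
    then show ?thesis using in_rank assms(2) by simp
  next
    case (Suc k)
    have "x \<notin> attractor_level VV i X k"
      using Suc not_less_Least[of k "\<lambda>k. x \<in> attractor_level VV i X k"]
      unfolding attractor_rank_def by simp
    then show ?thesis using that Suc in_rank by auto
  qed
qed

lemma attractor_strategy_move:
  assumes "x \<in> attractor VV i X" "x \<notin> X" "own x = i"
  shows "attractor_strategy VV i X x \<in> R x \<inter> VV \<and>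
    attractor_strategy VV i X x \<in> attractor_level VV i X (attractor_rank VV i X x - 1)"
proof -
  obtain k where "attractor_rank VV i X x = Suc k" "\<exists>y \<in> R x \<inter> VV. y \<in> attractor_level VV i X k"
    using attractor_rank_step[OF assms(1,2)] assms(3) by metis
  then have "\<exists>y. y \<in> R x \<inter> VV \<and> y \<in> attractor_level VV i X (attractor_rank VV i X x - 1)"
    by auto
  then show ?thesis unfolding attractor_strategy_def by (rule someI_ex)
qed

lemma attractor_rank_decreases:
  assumes "x \<in> attractor VV i X" "x \<notin> X" "y \<in> R x \<inter> VV"
    and "own x = i \<Longrightarrow> y = attractor_strategy VV i X x"
  shows "y \<in> attractor VV i X \<and> attractor_rank VV i X y < attractor_rank VV i X x"
proof -
  obtain k where k: "attractor_rank VV i X x = Suc k"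
    "own x \<noteq> i \<Longrightarrow> \<forall>y \<in> R x \<inter> VV. y \<in> attractor_level VV i X k"
    using attractor_rank_step[OF assms(1,2)] by metis
  have "y \<in> attractor_level VV i X k"
    using attractor_strategy_move[OF assms(1,2)] assms(3,4) k by (cases "own x = i") auto
  moreover have "attractor_rank VV i X y \<le> k"
    unfolding attractor_rank_def using calculation by (rule Least_le)
  ultimately show ?thesis using k(1) unfolding attractor_def by auto
qed

lemma attractor_reaches:
  assumes "play VV f" "f n \<in> attractor VV i X"
    and "\<And>k. f k \<in> attractor VV i X - X \<Longrightarrow> own (f k) = i \<Longrightarrow>
      f (Suc k) = attractor_strategy VV i X (f k)"
  shows "\<exists>k\<ge>n. f k \<in> X"
  using assms(2)
proof (induction "attractor_rank VV i X (f n)" arbitrary: n rule: less_induct)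
  case less
  show ?case
  proof (cases "f n \<in> X")
    case False
    have "f (Suc n) \<in> R (f n) \<inter> VV" using assms(1) unfolding play_def by blast
    then have "f (Suc n) \<in> attractor VV i X \<and>
        attractor_rank VV i X (f (Suc n)) < attractor_rank VV i X (f n)"
      using attractor_rank_decreases[OF less.prems False] assms(3) less.prems False by blast
    then show ?thesis using less.hyps[of "Suc n"] Suc_leD by blast
  qed blast
qed

definition some_move :: "'n set \<Rightarrow> 'n \<Rightarrow> 'n" where
  "some_move VV x = (SOME y. y \<in> R x \<inter> VV)"

lemma strategy_some_move:
  assumes "\<forall>x\<in>VV. R x \<inter> VV \<noteq> {}"
  shows "strategy VV i (some_move VV)"
  unfolding strategy_def some_move_def using assms some_in_eq by blast

lemma strategy_extend:
  assumes "strategy T i \<sigma>" "T \<subseteq> VV" "strategy VV i \<tau>"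
  shows "strategy VV i (\<lambda>x. if x \<in> T then \<sigma> x else \<tau> x)"
  using assms unfolding strategy_def by auto

lemma strategy_attractor_extend:
  assumes "strategy VV i \<tau>"
  shows "strategy VV i (\<lambda>x. if x \<in> attractor VV i X - X then attractor_strategy VV i X x else \<tau> x)"
  using assms attractor_strategy_move[of _ VV i X] unfolding strategy_def by auto

lemma wins_from_closed_subset:
  assumes closed_other: "\<And>x. x \<in> T \<Longrightarrow> own x \<noteq> j \<Longrightarrow> R x \<inter> VV \<subseteq> T"
    and closed_own: "\<And>x. x \<in> T \<Longrightarrow> own x = j \<Longrightarrow> \<tau> x \<in> T"
    and agree: "\<And>x. x \<in> T \<Longrightarrow> own x = j \<Longrightarrow> \<tau> x = \<sigma> x"
    and "T \<subseteq> S" "wins_from S j \<sigma> x" "x \<in> T"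
  shows "wins_from VV j \<tau> x"
  unfolding wins_from_def
proof (intro allI impI)
  fix f assume f: "play VV f \<and> conforms j \<tau> f \<and> f 0 = x"
  have inT: "f n \<in> T" for n
  proof (induction n)
    case (Suc n)
    show ?case
    proof (cases "own (f n) = j")
      case True
      then show ?thesis using f closed_own[OF Suc] unfolding conforms_def by simp
    next
      case False
      have "f (Suc n) \<in> R (f n) \<inter> VV" using f unfolding play_def by blast
      then show ?thesis using closed_other[OF Suc False] by blast
    qed
  qed (use f \<open>x \<in> T\<close> in simp)
  have "play S f" using f inT \<open>T \<subseteq> S\<close> unfolding play_def by blast
  moreover have "conforms j \<sigma> f" using f inT agree unfolding conforms_def by metis
  ultimately show "winning_play j f" using assms(5) f unfolding wins_from_def by blast
qed

lemma wins_from_until_exit: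
  assumes agree: "\<And>x. x \<in> T \<Longrightarrow> own x = j \<Longrightarrow> \<tau> x = \<sigma> x"
    and exits: "\<And>y. y \<in> VV - T \<Longrightarrow> wins_from VV j \<tau> y"
    and "wins_from T j \<sigma> x"
  shows "wins_from VV j \<tau> x"
  unfolding wins_from_def
proof (intro allI impI)
  fix f assume f: "play VV f \<and> conforms j \<tau> f \<and> f 0 = x"
  show "winning_play j f"
  proof (cases "\<forall>n. f n \<in> T")
    case True
    then have "play T f" using f unfolding play_def by blast
    moreover have "conforms j \<sigma> f" using f True agree unfolding conforms_def by metis
    ultimately show ?thesis using assms(3) f unfolding wins_from_def by blast
  next
    case False
    then obtain k where "f k \<in> VV - T" using f unfolding play_def by blast
    then show ?thesis using exits wins_from_suffix[of VV j \<tau> f k] f by blast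
  qed
qed

lemma wins_from_attractor:
  assumes "\<And>y. y \<in> X \<Longrightarrow> wins_from VV i \<tau> y"
    and "\<And>x. x \<in> attractor VV i X - X \<Longrightarrow> own x = i \<Longrightarrow> \<tau> x = attractor_strategy VV i X x"
    and "x \<in> attractor VV i X"
  shows "wins_from VV i \<tau> x"
  unfolding wins_from_def
proof (intro allI impI)
  fix f assume f: "play VV f \<and> conforms i \<tau> f \<and> f 0 = x"
  then obtain k where "f k \<in> X"
    using attractor_reaches[of VV f 0 i X] assms(2,3) unfolding conforms_def by auto
  then show "winning_play i f" using assms(1) wins_from_suffix[of VV i \<tau> f k] f by blast
qed

lemma wins_from_trap:
  assumes trap: "\<And>x. x \<in> T \<Longrightarrow> own x \<noteq> j \<Longrightarrow> R x \<inter> VV \<subseteq> T"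
    and strat: "strategy T j \<sigma>"
    and agree: "\<And>x. x \<in> T \<Longrightarrow> wins_from T j \<sigma> x \<Longrightarrow> own x = j \<Longrightarrow> \<tau> x = \<sigma> x"
    and "x \<in> T" "wins_from T j \<sigma> x"
  shows "wins_from VV j \<tau> x"
proof (rule wins_from_closed_subset[where T = "{y \<in> T. wins_from T j \<sigma> y}" and S = T])
  fix y assume y: "y \<in> {y \<in> T. wins_from T j \<sigma> y}"
  show "R y \<inter> VV \<subseteq> {y \<in> T. wins_from T j \<sigma> y}" if "own y \<noteq> j"
    using trap[of y] wins_from_step[of T j \<sigma> y] y that by blast
  show "\<tau> y \<in> {y \<in> T. wins_from T j \<sigma> y}" if "own y = j"
    using strat wins_from_step[of T j \<sigma> y "\<sigma> y"] agree[of y] y that unfolding strategy_def by auto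
  show "\<tau> y = \<sigma> y" if "own y = j" using agree y that by blast
qed (use assms in auto)

lemma wins_from_attractor_of_winning_region:
  assumes trap: "\<And>x. x \<in> C \<Longrightarrow> own x \<noteq> j \<Longrightarrow> R x \<inter> VV \<subseteq> C" and strat: "strategy C j \<sigma>"
    and agree: "\<And>x. x \<in> W \<Longrightarrow> own x = j \<Longrightarrow> \<tau> x = \<sigma> x"
    and attract: "\<And>x. x \<in> attractor VV j W - W \<Longrightarrow> own x = j \<Longrightarrow> \<tau> x = attractor_strategy VV j W x"
    and W: "W = {x \<in> C. wins_from C j \<sigma> x}" and "x \<in> attractor VV j W"
  shows "wins_from VV j \<tau> x"
proof (rule wins_from_attractor[OF _ attract \<open>x \<in> attractor VV j W\<close>])
  fix y assume "y \<in> W"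
  then show "wins_from VV j \<tau> y"
    using wins_from_trap[OF trap strat, of \<tau> y] agree W by blast
qed

lemma wins_from_other_player:
  assumes "winning_strategies C \<sigma>" "x \<in> C" "\<not> wins_from C (\<not> i) (\<sigma> (\<not> i)) x"
  shows "wins_from C i (\<sigma> i) x"
proof -
  obtain j where "wins_from C j (\<sigma> j) x" using assms(1,2) unfolding winning_strategies_def by blast
  then show ?thesis using assms(3) by (cases "j = i") auto
qed

text \<open>The two cases of Zielonka's recursion.  \<open>P\<close> is the set of nodes of minimal
  priority \<open>m\<close>, \<open>i\<close> the player favoured by \<open>m\<close>, and \<open>C\<close> the complement of
  \<open>i\<close>'s attractor to \<open>P\<close>, which is solved recursively.\<close>

lemma wins_from_if_opponent_wins_nowhere:
  assumes min: "\<And>x. x \<in> VV \<Longrightarrow> m \<le> pr x" and i: "i = even m" and P: "P = {x \<in> VV. pr x = m}"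
    and C: "C = VV - attractor VV i P"
    and winC: "\<And>x. x \<in> C \<Longrightarrow> wins_from C i \<sigma> x"
    and \<tau>: "\<And>x. x \<in> attractor VV i P - P \<Longrightarrow> own x = i \<Longrightarrow> \<tau> x = attractor_strategy VV i P x"
      "\<And>x. x \<in> C \<Longrightarrow> own x = i \<Longrightarrow> \<tau> x = \<sigma> x"
  shows "wins_from VV i \<tau> x"
  unfolding wins_from_def
proof (intro allI impI)
  fix f assume f: "play VV f \<and> conforms i \<tau> f \<and> f 0 = x"
  have fV: "f n \<in> VV" for n using f unfolding play_def by blast
  show "winning_play i f"
  proof (cases "\<exists>\<^sub>\<infinity>n. f n \<in> P")
    case True
    then have "\<exists>\<^sub>\<infinity>n. pr (f n) = m" by (rule INFM_mono) (simp add: P)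
    moreover have "m \<le> pr (f n)" for n using min fV by blast
    ultimately show ?thesis using winning_play_min_recurring[of f m i] i by blast
  next
    case False
    then obtain N where N: "\<And>n. n \<ge> N \<Longrightarrow> f n \<notin> P" unfolding not_INFM MOST_nat_le by blast
    have follows: "f (Suc k) = attractor_strategy VV i P (f k)"
      if "f k \<in> attractor VV i P - P" "own (f k) = i" for k
      using f \<tau>(1)[OF that] that(2) unfolding conforms_def by simp
    have inC: "f n \<in> C" if "n \<ge> N" for n
    proof (rule ccontr)
      assume "f n \<notin> C"
      then have "f n \<in> attractor VV i P" using fV C by blast
      then obtain k where "k \<ge> n" "f k \<in> P"
        using attractor_reaches[of VV f n i P, OF _ _ follows] f by blast
      then show False using N that by auto
    qed
    let ?g = "\<lambda>n. f (n + N)"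
    have "play C ?g" using play_shift[of VV f N] f inC unfolding play_def by simp
    moreover have "conforms i \<sigma> ?g"
      using f inC \<tau>(2) unfolding conforms_def by simp
    ultimately have "winning_play i ?g" using winC[OF inC[of N]] unfolding wins_from_def by simp
    then show ?thesis by (simp only: winning_play_shift)
  qed
qed

lemma winning_strategies_if_opponent_wins_nowhere:
  assumes nd: "\<forall>x\<in>VV. R x \<inter> VV \<noteq> {}"
    and min: "\<And>x. x \<in> VV \<Longrightarrow> m \<le> pr x" and i: "i = even m" and P: "P = {x \<in> VV. pr x = m}"
    and C: "C = VV - attractor VV i P"
    and \<sigma>C: "winning_strategies C \<sigma>C" and nowhere: "\<forall>x\<in>C. \<not> wins_from C (\<not> i) (\<sigma>C (\<not> i)) x"
  shows "\<exists>\<sigma>. winning_strategies VV \<sigma>"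
proof -
  have strat: "strategy C i (\<sigma>C i)" using \<sigma>C unfolding winning_strategies_def by blast
  have winC: "wins_from C i (\<sigma>C i) x" if "x \<in> C" for x
    using wins_from_other_player[OF \<sigma>C that] nowhere that by blast
  define \<tau> where "\<tau> x = (if x \<in> attractor VV i P - P then attractor_strategy VV i P x
    else if x \<in> C then \<sigma>C i x else some_move VV x)" for x
  have "strategy VV i \<tau>"
    unfolding \<tau>_def
      using strategy_attractor_extend[OF strategy_extend[OF strat _ strategy_some_move[OF nd]]]
    C by blast
  moreover have "wins_from VV i \<tau> x" for x
    by (rule wins_from_if_opponent_wins_nowhere[OF min i P C winC]) (auto simp: \<tau>_def C)
  ultimately have "winning_strategies VV (\<lambda>j. if j = i then \<tau> else some_move VV)"
    unfolding winning_strategies_def using strategy_some_move[OF nd] by auto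
  then show ?thesis by blast
qed

lemma wins_from_attractor_complement:
  assumes D: "D = VV - attractor VV j X" and \<sigma>D: "winning_strategies D \<sigma>D" and "x \<in> D"
    and \<tau>: "\<And>y. y \<in> D \<Longrightarrow> \<tau> y = \<sigma>D j y" and \<tau>': "\<And>y. y \<in> D \<Longrightarrow> \<tau>' y = \<sigma>D (\<not> j) y"
    and win_attractor: "\<And>y. y \<in> attractor VV j X \<Longrightarrow> wins_from VV j \<tau> y"
  shows "wins_from VV j \<tau> x \<or> wins_from VV (\<not> j) \<tau>' x"
proof -
  obtain k where k: "wins_from D k (\<sigma>D k) x" using \<sigma>D \<open>x \<in> D\<close> unfolding winning_strategies_def
    by blast
  show ?thesis
  proof (cases "k = j")
    case True
    have "wins_from VV j \<tau> x"
      by (rule wins_from_until_exit[where T = D and \<sigma> = "\<sigma>D j"])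
        (use \<tau> win_attractor k True D in auto)
    then show ?thesis by blast
  next
    case False
    have "wins_from VV (\<not> j) \<tau>' x"
    proof (rule wins_from_trap[where T = D and \<sigma> = "\<sigma>D (\<not> j)"])
      show "R y \<inter> VV \<subseteq> D" if "y \<in> D" "own y \<noteq> (\<not> j)" for y
        using attractor_complement_own[of y VV j X] that unfolding D by simp
      show "strategy D (\<not> j) (\<sigma>D (\<not> j))" using \<sigma>D unfolding winning_strategies_def by blast
    qed (use \<tau>' k False \<open>x \<in> D\<close> in \<open>auto simp: eq_commute[of k]\<close>)
    then show ?thesis by blast
  qed
qed

lemma winning_strategies_if_opponent_wins_somewhere:
  assumes nd: "\<forall>x\<in>VV. R x \<inter> VV \<noteq> {}"
    and C: "C \<subseteq> VV" and trapC: "\<And>x. x \<in> C \<Longrightarrow> own x = i \<Longrightarrow> R x \<inter> VV \<subseteq> C"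
    and \<sigma>C: "winning_strategies C \<sigma>C" and W: "W = {x \<in> C. wins_from C (\<not> i) (\<sigma>C (\<not> i)) x}"
    and D: "D = VV - attractor VV (\<not> i) W" and \<sigma>D: "winning_strategies D \<sigma>D"
  shows "\<exists>\<sigma>. winning_strategies VV \<sigma>"
proof -
  define B where "B = attractor VV (\<not> i) W"
  define \<tau> where "\<tau> x = (if x \<in> B - W then attractor_strategy VV (\<not> i) W x
    else if x \<in> D then \<sigma>D (\<not> i) x else if x \<in> C then \<sigma>C (\<not> i) x else some_move VV x)" for x
  define \<sigma> where "\<sigma> j = (if j = i then (\<lambda>x. if x \<in> D then \<sigma>D i x else some_move VV x) else \<tau>)" for j
  have DV: "D \<subseteq> VV" and WB: "W \<subseteq> B" using D W C subset_attractor[of W VV "\<not> i"] unfolding B_def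
    by auto
  have sC: "strategy C j (\<sigma>C j)" and sD: "strategy D j (\<sigma>D j)" for j
    using \<sigma>C \<sigma>D unfolding winning_strategies_def by blast+
  have "strategy VV i (\<sigma> i)"
    unfolding \<sigma>_def using strategy_extend[OF sD DV strategy_some_move[OF nd]] by simp
  moreover have "strategy VV (\<not> i) \<tau>"
    unfolding \<tau>_def B_def
    by (rule strategy_attractor_extend, rule strategy_extend[OF sD DV],
        rule strategy_extend[OF sC C strategy_some_move[OF nd]])
  ultimately have strat: "strategy VV j (\<sigma> j)" for j
    unfolding \<sigma>_def by (cases "j = i") auto
  have winB: "wins_from VV (\<not> i) \<tau> x" if "x \<in> B" for x
  proof (rule wins_from_attractor_of_winning_region[OF _ sC _ _ W])
    show "R y \<inter> VV \<subseteq> C" if "y \<in> C" "own y \<noteq> (\<not> i)" for y using trapC that by simp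
    show "\<tau> y = \<sigma>C (\<not> i) y" if "y \<in> W" for y using that WB W unfolding \<tau>_def D B_def by auto
    show "\<tau> y = attractor_strategy VV (\<not> i) W y" if "y \<in> attractor VV (\<not> i) W - W" for y
      using that unfolding \<tau>_def B_def by simp
  qed (use that in \<open>simp add: B_def\<close>)
  have winD: "wins_from VV (\<not> i) \<tau> x \<or> wins_from VV (\<not> \<not> i) (\<sigma> i) x" if "x \<in> D" for x
    by (rule wins_from_attractor_complement[OF D \<sigma>D that]) (auto simp: \<tau>_def \<sigma>_def D B_def winB)
  have "\<exists>j. wins_from VV j (\<sigma> j) x" if "x \<in> VV" for x
  proof (cases "x \<in> B")
    case True
    then have "wins_from VV (\<not> i) (\<sigma> (\<not> i)) x" using winB unfolding \<sigma>_def by simp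
    then show ?thesis ..
  next
    case False
    then have "x \<in> D" using that unfolding D B_def by blast
    then consider "wins_from VV (\<not> i) (\<sigma> (\<not> i)) x" | "wins_from VV i (\<sigma> i) x"
      using winD unfolding \<sigma>_def by auto
    then show ?thesis by cases blast+
  qed
  then show ?thesis using strat unfolding winning_strategies_def by blast
qed

lemma attractor_complement_psubset: "X \<inter> VV \<noteq> {} \<Longrightarrow> VV - attractor VV i X \<subset> VV"
  using subset_attractor[of X VV i] attractor_subset by blast

theorem positional_determinacy:
  assumes "finite VV" "\<forall>x\<in>VV. R x \<inter> VV \<noteq> {}"
  shows "\<exists>\<sigma>. winning_strategies VV \<sigma>"
  using assms
proof (induction VV rule: finite_psubset_induct)
  case (psubset VV)
  have solve: "\<exists>\<sigma>. winning_strategies (VV - attractor VV j X) \<sigma>" if "X \<inter> VV \<noteq> {}" for j X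
    using psubset.IH[OF attractor_complement_psubset[OF that]]
      attractor_complement_no_dead_ends[OF psubset.hyps psubset.prems, of j X] by blast
  show ?case
  proof (cases "VV = {}")
    case True
    then show ?thesis unfolding winning_strategies_def strategy_def by auto
  next
    case False
    define m where "m = Min (pr ` VV)"
    define i where "i = even m"
    define P where "P = {x \<in> VV. pr x = m}"
    define C where "C = VV - attractor VV i P"
    have min: "m \<le> pr x" if "x \<in> VV" for x unfolding m_def using psubset.hyps that by simp
    have "m \<in> pr ` VV" unfolding m_def using psubset.hyps False by simp
    then have "P \<inter> VV \<noteq> {}" unfolding P_def by auto
    then obtain \<sigma>C where \<sigma>C: "winning_strategies C \<sigma>C" using solve[of P i] unfolding C_def by blast
    define W where "W = {x \<in> C. wins_from C (\<not> i) (\<sigma>C (\<not> i)) x}"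
    show ?thesis
    proof (cases "W = {}")
      case True
      then have "\<forall>x\<in>C. \<not> wins_from C (\<not> i) (\<sigma>C (\<not> i)) x" unfolding W_def by simp
      from winning_strategies_if_opponent_wins_nowhere[OF psubset.prems min i_def P_def C_def \<sigma>C this]
      show ?thesis .
    next
      case False
      define D where "D = VV - attractor VV (\<not> i) W"
      have "W \<subseteq> VV" unfolding W_def C_def by (rule subset_trans[OF Collect_subset Diff_subset])
      then have "W \<inter> VV \<noteq> {}" using False by blast
      then obtain \<sigma>D where \<sigma>D: "winning_strategies D \<sigma>D" using solve[of W "\<not> i"] unfolding D_def
        by blast
      have trapC: "R x \<inter> VV \<subseteq> C" if "x \<in> C" "own x = i" for x
        using attractor_complement_own[of x VV i P] that unfolding C_def by blast
      have "C \<subseteq> VV" unfolding C_def by blast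
      from winning_strategies_if_opponent_wins_somewhere[OF psubset.prems this trapC \<sigma>C W_def D_def \<sigma>D]
      show ?thesis .
    qed
  qed
qed

end

subsection \<open>Partial strategies and the extended game\<close>

lemma conforming_singleton [simp]: "conforming V Vd E \<pi> [x] \<longleftrightarrow> x \<in> V"
  unfolding conforming_def by auto

lemma conforming_snoc:
  assumes "p \<noteq> []"
  shows "conforming V Vd E \<pi> (p @ [w]) \<longleftrightarrow>
    conforming V Vd E \<pi> p \<and> w \<in> V \<and> (last p, w) \<in> E \<and> (last p \<in> Vd \<longrightarrow> \<pi> p = Some w)"
proof -
  let ?n = "length p - 1"
  have n: "length p = Suc ?n" "last p = p ! ?n" using assms by (simp_all add: last_conv_nth)
  have split: "(\<forall>i. Suc i < length (p @ [w]) \<longrightarrow> Q i) \<longleftrightarrow> (\<forall>i. Suc i < length p \<longrightarrow> Q i) \<and> Q ?n" for Q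
    using n(1) by (auto simp: less_Suc_eq) (metis diff_Suc_1)
  have "(p @ [w]) ! i = p ! i" "(p @ [w]) ! Suc i = p ! Suc i"
    "take (Suc i) (p @ [w]) = take (Suc i) p"
    if "Suc i < length p" for i
    using that by (simp_all add: nth_append)
  moreover have "(p @ [w]) ! ?n = last p" "(p @ [w]) ! Suc ?n = w" "take (Suc ?n) (p @ [w]) = p"
    using n by (simp_all add: nth_append)
  ultimately show ?thesis
    unfolding conforming_def split using assms by (auto cong: conj_cong)
qed

lemma conforming_take:
  assumes "conforming V Vd E \<pi> p" "0 < k"
  shows "conforming V Vd E \<pi> (take k p)"
  using assms unfolding conforming_def by (auto simp: min_def dest: in_set_takeD)

lemma last_take_Suc: "k < length p \<Longrightarrow> last (take (Suc k) p) = p ! k"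
  by (simp add: take_Suc_conv_app_nth)

abbreviation ext_conforming where
  "ext_conforming V Vd E U \<pi> \<equiv> conforming (ext_V V) (ext_Vd Vd) (ext_E E Vd U) (ext_strat V Vd E U \<pi>)"

lemma ext_strat_map_Some:
  "ext_strat V Vd E U \<pi> (map Some p) =
    (case \<pi> p of Some w \<Rightarrow> Some (Some w)
     | None \<Rightarrow> (if conforming V Vd E \<pi> p \<and> last p \<in> Vd \<inter> U then Some None else None))"
  unfolding ext_strat_def by (simp add: comp_def)

lemma ext_conforming_map_Some:
  "ext_conforming V Vd E U \<pi> (map Some p) \<longleftrightarrow> conforming V Vd E \<pi> p"
proof (induction p rule: rev_induct)
  case (snoc x p)
  show ?case
  proof (cases "p = []")
    case False
    then show ?thesis
      using conforming_snoc[of "map Some p"] conforming_snoc[of p] snoc.IH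
      by (auto simp: last_map ext_V_def ext_E_def ext_Vd_def ext_strat_map_Some split: option.splits)
  qed (auto simp: ext_V_def)
qed (simp add: conforming_def)

lemma ext_conforming_None_last:
  assumes "ext_conforming V Vd E U \<pi> ps" "Suc i < length ps"
  shows "ps ! i \<noteq> None"
  using assms unfolding conforming_def ext_E_def by auto

lemma ext_conforming_cases:
  assumes "ext_conforming V Vd E U \<pi> ps"
  obtains (Some) p where "ps = map Some p" "conforming V Vd E \<pi> p"
    | (None) "last ps = None"
proof (cases "None \<in> set ps")
  case True
  then obtain i where i: "i < length ps" "ps ! i = None" by (auto simp: in_set_conv_nth)
  then have "\<not> Suc i < length ps" using ext_conforming_None_last[OF assms] by blast
  then have "i = length ps - 1" using i(1) by linarith
  then have "last ps = None" using i by (metis last_conv_nth list.size(3) not_less_zero)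
  then show ?thesis by (rule None)
next
  case False
  then have "ps = map Some (map the ps)" by (induction ps) auto
  then show ?thesis using Some assms ext_conforming_map_Some by metis
qed

lemma partial_strategy_SomeD:
  assumes "partial_strategy V Vd E U \<pi> v" "\<pi> p = Some w"
  shows "p \<noteq> [] \<and> hd p = v \<and> conforming V Vd E \<pi> (p @ [w]) \<and> last p \<in> Vd"
proof -
  have "p \<in> dom \<pi>" using assms(2) by blast
  then have "p \<noteq> [] \<and> hd p = v \<and> conforming V Vd E \<pi> (p @ [the (\<pi> p)]) \<and> last p \<in> Vd"
    using assms(1) unfolding partial_strategy_def by blast
  then show ?thesis using assms(2) by simp
qed

lemma partial_strategy_defined:
  assumes "partial_strategy V Vd E U \<pi> v" "conforming V Vd E \<pi> p" "hd p = v" "last p \<in> Vd" "last p \<notin> U"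
  shows "p \<in> dom \<pi>"
  using assms unfolding partial_strategy_def by blast

text \<open>The finite half of being a partial winning strategy holds for every partial
  strategy: whenever \<open>\<Diamond>\<close> is to move, the strategy or the edge to \<open>\<top>\<close> continues the play.\<close>

lemma ext_maximal_play_ends_in_Box:
  assumes strat: "partial_strategy V Vd E U \<pi> v"
    and c: "ext_conforming V Vd E U \<pi> ps" and hd: "hd ps = Some v"
    and maximal: "\<nexists>w. ext_conforming V Vd E U \<pi> (ps @ [w])"
  shows "last ps \<notin> ext_Vd Vd"
  using c
proof (cases rule: ext_conforming_cases)
  case (Some p)
  show ?thesis
  proof
    assume "last ps \<in> ext_Vd Vd"
    moreover have "p \<noteq> []" using Some unfolding conforming_def by blast
    ultimately have p: "last p \<in> Vd" "hd p = v" using Some hd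
      by (auto simp: ext_Vd_def last_map hd_map)
    show False
    proof (cases "\<pi> p")
      case (Some w)
      then have "conforming V Vd E \<pi> (p @ [w])" using partial_strategy_SomeD[OF strat] by blast
      then show False
        using maximal ext_conforming_map_Some[of V Vd E U \<pi> "p @ [w]"] \<open>ps = map Some p\<close> by simp
    next
      case None
      then have "last p \<in> U" using partial_strategy_defined[OF strat Some(2) p(2,1)] by blast
      then have "ext_conforming V Vd E U \<pi> (ps @ [None])"
        using conforming_snoc[of ps] c p None Some \<open>p \<noteq> []\<close>
        by (simp add: last_map ext_V_def ext_E_def ext_strat_map_Some)
      then show False using maximal by blast
    qed
  qed
qed (simp add: ext_Vd_def)

lemma inf_conforming_ext_Some_iff:
  "inf_conforming (ext_V V) (ext_Vd Vd) (ext_E E Vd U) (ext_strat V Vd E U \<pi>) (\<lambda>n. Some (F n)) \<longleftrightarrow>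
    (\<forall>n>0. conforming V Vd E \<pi> (map F [0..<n]))"
  using ext_conforming_map_Some[of V Vd E U \<pi> "map F [0..<_]"]
  unfolding inf_conforming_def by (simp add: comp_def)

lemma inf_conforming_ext_not_None:
  assumes "inf_conforming (ext_V V) (ext_Vd Vd) (ext_E E Vd U) (ext_strat V Vd E U \<pi>) f"
  shows "f = (\<lambda>n. Some (the (f n)))"
proof
  fix n
  have "ext_conforming V Vd E U \<pi> (map f [0..<Suc (Suc n)])" using assms
    unfolding inf_conforming_def by blast
  from ext_conforming_None_last[OF this, of n] show "f n = Some (the (f n))"
    by (simp add: nth_append)
qed

lemma partial_winningI:
  assumes strat: "partial_strategy V Vd E U \<pi> v"
    and inf: "\<And>F. \<forall>n>0. conforming V Vd E \<pi> (map F [0..<n]) \<Longrightarrow> F 0 = v \<Longrightarrow>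
      even (LEAST q. \<exists>\<^sub>\<infinity>n. \<omega> (F n) = q)"
  shows "partial_winning V Vd E \<omega> U \<pi> v"
  unfolding partial_winning_def winning_from_def
proof (intro conjI allI impI)
  fix ps
  assume "ext_conforming V Vd E U \<pi> ps \<and> hd ps = Some v \<and> \<not> (\<exists>w. ext_conforming V Vd E U \<pi> (ps @ [w]))"
  then show "last ps \<notin> ext_Vd Vd" using ext_maximal_play_ends_in_Box[OF strat] by blast
next
  fix f
  assume f: "inf_conforming (ext_V V) (ext_Vd Vd) (ext_E E Vd U) (ext_strat V Vd E U \<pi>) f \<and> f 0 = Some v"
  define F where "F n = the (f n)" for n
  have f_F: "f = (\<lambda>n. Some (F n))" unfolding F_def using inf_conforming_ext_not_None f by blast
  then have "\<forall>n>0. conforming V Vd E \<pi> (map F [0..<n])" "F 0 = v"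
    using f inf_conforming_ext_Some_iff[of V Vd E U \<pi> F] by auto
  then show "inf_won (ext_\<omega> \<omega>) f" using inf f_F unfolding inf_won_def ext_\<omega>_def by simp
qed (fact strat)

lemma partial_winning_infinite_play:
  assumes "partial_winning V Vd E \<omega> U \<pi> v" "\<forall>n>0. conforming V Vd E \<pi> (map F [0..<n])" "F 0 = v"
  shows "even (LEAST q. \<exists>\<^sub>\<infinity>n. \<omega> (F n) = q)"
proof -
  have "inf_conforming (ext_V V) (ext_Vd Vd) (ext_E E Vd U) (ext_strat V Vd E U \<pi>) (\<lambda>n. Some (F n))"
    using assms(2) inf_conforming_ext_Some_iff by blast
  then have "inf_won (ext_\<omega> \<omega>) (\<lambda>n. Some (F n))"
    using assms(1,3) unfolding partial_winning_def winning_from_def by simp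
  then show ?thesis unfolding inf_won_def ext_\<omega>_def by simp
qed

lemma rew_le_refl: "rew_le p p"
  unfolding rew_le_def by auto

lemma rew_le_trans: "rew_le p q \<Longrightarrow> rew_le q r \<Longrightarrow> rew_le p r"
  unfolding rew_le_def by auto

lemma rew_le_antisym: "rew_le p q \<Longrightarrow> rew_le q p \<Longrightarrow> p = q"
  unfolding rew_le_def by auto

lemma rew_le_total: "rew_le p q \<or> rew_le q p"
  unfolding rew_le_def by auto

lemma rew_le_greatest_exists:
  assumes "finite S" "S \<noteq> {}"
  shows "\<exists>q\<in>S. \<forall>q'\<in>S. rew_le q' q"
  using assms
proof (induction S rule: finite_ne_induct)
  case (insert x F)
  then obtain q where q: "q \<in> F" "\<forall>q'\<in>F. rew_le q' q" by blast
  show ?case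
  proof (cases "rew_le x q")
    case False
    then show ?thesis using q rew_le_total rew_le_trans rew_le_refl by blast
  qed (use q in auto)
qed (use rew_le_refl in auto)

text \<open>A priority whose minimum with \<open>q\<close> is even exactly when \<open>q \<sqsubseteq> Q\<close>.\<close>

definition rew_threshold :: "nat \<Rightarrow> nat" where
  "rew_threshold Q = (if even Q then Q + 1 else Q - 1)"

lemma even_min_rew_threshold: "even (min q (rew_threshold Q)) \<longleftrightarrow> rew_le q Q"
  unfolding rew_threshold_def rew_le_def min_def
    by (cases "even Q"; cases "even q") (auto, presburger+)

subsection \<open>The auxiliary parity game\<close>

datatype 'v aux_node = Node 'v | Start | Exit 'v | Won | Lost

locale aux_game =
  fixes V Vd U :: "'v set" and E :: "('v \<times> 'v) set" and \<omega> :: "'v \<Rightarrow> nat"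
    and v :: 'v and \<pi> :: "'v list \<Rightarrow> 'v option"
  assumes finite_V: "finite V" and Vd_subset: "Vd \<subseteq> V" and E_subset: "E \<subseteq> V \<times> V"
    and U_subset: "U \<subseteq> V" and v_in_V: "v \<in> V" and \<pi>_winning: "partial_winning V Vd E \<omega> U \<pi> v"
    and v_not_Vd_U: "v \<notin> Vd \<inter> U"
begin

definition exit_prios :: "'v \<Rightarrow> nat set" where
  "exit_prios u = {q. (u, q) \<in> preprofile V Vd E \<omega> U \<pi> v}"

definition best_exit_prio :: "'v \<Rightarrow> nat" where
  "best_exit_prio u = (SOME q. q \<in> exit_prios u \<and> (\<forall>q'\<in>exit_prios u. rew_le q' q))"

text \<open>\<open>Start\<close> is a copy of \<open>v\<close> without the exit: a path of length one does not
  count in the profile.\<close>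

definition start :: "'v aux_node" where
  "start = (if v \<in> U then Start else Node v)"

definition dead_end_sink :: "'v \<Rightarrow> 'v aux_node" where
  "dead_end_sink w = (if w \<in> Vd then Lost else Won)"

fun aux_succ :: "'v aux_node \<Rightarrow> 'v aux_node set" where
  "aux_succ (Node w) = Node ` (E `` {w}) \<union> (if w \<in> U then {Exit w} else {}) \<union>
     (if E `` {w} = {} then {dead_end_sink w} else {})"
| "aux_succ Start = Node ` (E `` {v}) \<union> (if E `` {v} = {} then {dead_end_sink v} else {})"
| "aux_succ (Exit u) = (if exit_prios u \<noteq> {} then {start} else {Lost})"
| "aux_succ Won = {Won}"
| "aux_succ Lost = {Lost}"

fun aux_diamond :: "'v aux_node \<Rightarrow> bool" where
  "aux_diamond (Node w) \<longleftrightarrow> w \<in> Vd"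
| "aux_diamond _ \<longleftrightarrow> False"

fun aux_prio :: "'v aux_node \<Rightarrow> nat" where
  "aux_prio (Node w) = \<omega> w"
| "aux_prio Start = \<omega> v"
| "aux_prio (Exit u) = (if exit_prios u \<noteq> {} then rew_threshold (best_exit_prio u) else 1)"
| "aux_prio Won = 0"
| "aux_prio Lost = 1"

definition aux_nodes :: "'v aux_node set" where
  "aux_nodes = Node ` V \<union> {Start} \<union> Exit ` U \<union> {Won, Lost}"

text \<open>The node of the auxiliary game reached after the history \<open>h\<close>, which starts at \<open>v\<close>.\<close>

definition position :: "'v list \<Rightarrow> 'v aux_node" where
  "position h = (if length h = 1 then start else Node (last h))"

sublocale H: parity_game aux_succ aux_diamond aux_prio .

lemma finite_aux_nodes: "finite aux_nodes"
  unfolding aux_nodes_def using finite_V U_subset by (simp add: finite_subset)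

lemma start_in_aux_nodes: "start \<in> aux_nodes"
  unfolding start_def aux_nodes_def using v_in_V by auto

lemma aux_succ_subset: "x \<in> aux_nodes \<Longrightarrow> aux_succ x \<subseteq> aux_nodes"
  using E_subset start_in_aux_nodes
  by (cases x) (auto simp: aux_nodes_def dead_end_sink_def)

lemma aux_no_dead_ends: "\<forall>x\<in>aux_nodes. aux_succ x \<inter> aux_nodes \<noteq> {}"
proof
  fix x assume x: "x \<in> aux_nodes"
  have "aux_succ x \<noteq> {}" by (cases x) auto
  then show "aux_succ x \<inter> aux_nodes \<noteq> {}" using aux_succ_subset[OF x] by auto
qed

lemma finite_exit_prios: "finite (exit_prios u)"
proof (rule finite_subset)
  show "exit_prios u \<subseteq> \<omega> ` V"
  proof
    fix q assume "q \<in> exit_prios u"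
    then obtain p where p: "conforming V Vd E \<pi> p" "q = Min (\<omega> ` set p)"
      unfolding exit_prios_def preprofile_def by auto
    then have "set p \<subseteq> V" "p \<noteq> []" unfolding conforming_def by auto
    then have "Min (\<omega> ` set p) \<in> \<omega> ` set p" by (intro Min_in) auto
    then show "q \<in> \<omega> ` V" using p(2) \<open>set p \<subseteq> V\<close> by blast
  qed
qed (use finite_V in simp)

lemma best_exit_prio:
  assumes "exit_prios u \<noteq> {}"
  shows "best_exit_prio u \<in> exit_prios u" "q \<in> exit_prios u \<Longrightarrow> rew_le q (best_exit_prio u)"
proof -
  have "\<exists>q. q \<in> exit_prios u \<and> (\<forall>q'\<in>exit_prios u. rew_le q' q)"
    using rew_le_greatest_exists[OF finite_exit_prios assms] by blast
  then have "best_exit_prio u \<in> exit_prios u \<and> (\<forall>q'\<in>exit_prios u. rew_le q' (best_exit_prio u))"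
    unfolding best_exit_prio_def by (rule someI_ex)
  then show "best_exit_prio u \<in> exit_prios u" "q \<in> exit_prios u \<Longrightarrow> rew_le q (best_exit_prio u)"
    by blast+
qed

lemma best_exit_prio_in_profile:
  assumes "exit_prios u \<noteq> {}"
  shows "(u, best_exit_prio u) \<in> profile V Vd E \<omega> U \<pi> v"
  using best_exit_prio[OF assms] rew_le_antisym
  unfolding profile_def exit_prios_def by blast

lemma position_in_aux_nodes: "h \<noteq> [] \<Longrightarrow> set h \<subseteq> V \<Longrightarrow> position h \<in> aux_nodes"
proof -
  assume "h \<noteq> []" "set h \<subseteq> V"
  then have "Node (last h) \<in> aux_nodes" unfolding aux_nodes_def using last_in_set by blast
  then show ?thesis unfolding position_def using start_in_aux_nodes by simp
qed

lemma position_snoc: "h \<noteq> [] \<Longrightarrow> position (h @ [w]) = Node w"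
  unfolding position_def by auto

lemma aux_prio_position: "h \<noteq> [] \<Longrightarrow> hd h = v \<Longrightarrow> aux_prio (position h) = \<omega> (last h)"
  unfolding position_def start_def by (cases h) auto

lemma aux_diamond_position: "h \<noteq> [] \<Longrightarrow> hd h = v \<Longrightarrow> aux_diamond (position h) \<longleftrightarrow> last h \<in> Vd"
  unfolding position_def start_def using v_not_Vd_U by (cases h) auto

lemma position_Vd: "h \<noteq> [] \<Longrightarrow> hd h = v \<Longrightarrow> last h \<in> Vd \<Longrightarrow> position h = Node (last h)"
  unfolding position_def start_def using v_not_Vd_U by (cases h) auto

lemma Node_in_aux_succ_Node: "Node w' \<in> aux_succ (Node w) \<longleftrightarrow> (w, w') \<in> E"
  by (auto simp: dead_end_sink_def)

lemma Node_in_aux_succ_position: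
  assumes "h \<noteq> []" "hd h = v"
  shows "Node w \<in> aux_succ (position h) \<longleftrightarrow> (last h, w) \<in> E"
  using assms unfolding position_def start_def
  by (cases h) (auto simp: dead_end_sink_def)

lemma position_take_Suc:
  assumes "k < length p"
  shows "position (take (Suc k) p) = (if k = 0 then start else Node (p ! k))"
  using assms last_take_Suc[OF assms] unfolding position_def by simp

lemma aux_prio_position_take:
  assumes "k < length p" "hd p = v"
  shows "aux_prio (position (take (Suc k) p)) = \<omega> (p ! k)"
  using assms aux_prio_position[of "take (Suc k) p"] last_take_Suc[OF assms(1)]
  by (cases p) auto

text \<open>Leaving at \<open>last p\<close> and returning to the start closes a cycle of the
  auxiliary game.\<close>

definition exit_cycle :: "'v list \<Rightarrow> 'v aux_node list" where
  "exit_cycle p = map (\<lambda>k. position (take (Suc k) p)) [0..<length p] @ [Exit (last p)]"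

lemma exit_cycle_nth:
  "k < length p \<Longrightarrow> exit_cycle p ! k = (if k = 0 then start else Node (p ! k))"
  "exit_cycle p ! length p = Exit (last p)"
  using position_take_Suc unfolding exit_cycle_def by (simp_all add: nth_append)

lemma exit_cycle_in_aux_nodes:
  assumes "p \<noteq> []" "set p \<subseteq> V" "last p \<in> U"
  shows "set (exit_cycle p) \<subseteq> aux_nodes"
proof -
  have "position (take (Suc k) p) \<in> aux_nodes" for k
    using assms(1,2) set_take_subset[of "Suc k" p] by (intro position_in_aux_nodes) auto
  moreover have "Exit (last p) \<in> aux_nodes" using assms(3) unfolding aux_nodes_def by blast
  ultimately show ?thesis unfolding exit_cycle_def by auto
qed

lemma aux_prio_exit_cycle:
  assumes "hd p = v" "exit_prios (last p) \<noteq> {}"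
  shows "aux_prio ` set (exit_cycle p) = insert (rew_threshold (best_exit_prio (last p))) (\<omega> ` set p)"
proof -
  have "aux_prio ` set (exit_cycle p) =
      insert (aux_prio (Exit (last p))) ((\<lambda>k. \<omega> (p ! k)) ` {0..<length p})"
    using aux_prio_position_take[OF _ assms(1)] unfolding exit_cycle_def by (auto simp: image_image)
  also have "(\<lambda>k. \<omega> (p ! k)) ` {0..<length p} = \<omega> ` set p"
    by (auto simp: in_set_conv_nth intro!: imageI)
  finally show ?thesis using assms(2) by simp
qed

lemma exit_cycle_step:
  assumes strat: "H.strategy aux_nodes i \<sigma>"
    and p: "conforming V Vd E \<theta> p" "hd p = v" "length p > 1" "last p \<in> U" "exit_prios (last p) \<noteq> {}"
    and steps: "\<And>k. Suc k < length p \<Longrightarrow> aux_diamond (position (take (Suc k) p)) = i \<Longrightarrow>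
      \<sigma> (position (take (Suc k) p)) = Node (p ! Suc k)"
    and exit: "aux_diamond (Node (last p)) = i \<Longrightarrow> \<sigma> (Node (last p)) = Exit (last p)"
    and j: "j < length (exit_cycle p)"
  shows "exit_cycle p ! (Suc j mod length (exit_cycle p)) \<in> aux_succ (exit_cycle p ! j) \<and>
    (aux_diamond (exit_cycle p ! j) = i \<longrightarrow>
      exit_cycle p ! (Suc j mod length (exit_cycle p)) = \<sigma> (exit_cycle p ! j))"
proof -
  let ?L = "length p"
  have len: "length (exit_cycle p) = Suc ?L" unfolding exit_cycle_def by simp
  have ne: "p \<noteq> []" using p(3) by auto
  then have last: "p ! (?L - 1) = last p" by (simp add: last_conv_nth)
  consider "Suc j < ?L" | "Suc j = ?L" | "j = ?L" using j len by linarith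
  then show ?thesis
  proof cases
    case 1
    have "take (Suc j) p \<noteq> []" "hd (take (Suc j) p) = hd p" using ne by (cases p; simp)+
    moreover have "(last (take (Suc j) p), p ! Suc j) \<in> E"
      using p(1) 1 last_take_Suc[of j p] unfolding conforming_def by simp
    ultimately have "Node (p ! Suc j) \<in> aux_succ (position (take (Suc j) p))"
      using Node_in_aux_succ_position p(2) by simp
    then show ?thesis
      using 1 len exit_cycle_nth(1)[of j p] exit_cycle_nth(1)[of "Suc j" p] position_take_Suc[of j p]
        steps[of j] by auto
  next
    case 2
    then have "j = ?L - 1" "j \<noteq> 0" using p(3) by auto
    then have "exit_cycle p ! j = Node (last p)" "Suc j mod length (exit_cycle p) = ?L"
      using exit_cycle_nth(1)[of j p] last len 2 by auto
    then show ?thesis using exit_cycle_nth(2)[of p] p(4) exit by simp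
  next
    case 3
    have "aux_succ (Exit (last p)) = {start}" using p(5) by simp
    moreover have "Exit (last p) \<in> aux_nodes" using p(4) unfolding aux_nodes_def by blast
    ultimately have "\<not> i \<Longrightarrow> \<sigma> (Exit (last p)) = start" using strat unfolding H.strategy_def by force
    then show ?thesis
      using 3 len exit_cycle_nth(1)[of 0 p] exit_cycle_nth(2) ne \<open>aux_succ (Exit (last p)) = {start}\<close>
      by auto
  qed
qed

lemma exit_cycle_parity:
  assumes win: "H.wins_from aux_nodes i \<sigma> start" and strat: "H.strategy aux_nodes i \<sigma>"
    and p: "conforming V Vd E \<theta> p" "hd p = v" "length p > 1" "last p \<in> U" "exit_prios (last p) \<noteq> {}"
    and steps: "\<And>k. Suc k < length p \<Longrightarrow> aux_diamond (position (take (Suc k) p)) = i \<Longrightarrow>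
      \<sigma> (position (take (Suc k) p)) = Node (p ! Suc k)"
    and exit: "aux_diamond (Node (last p)) = i \<Longrightarrow> \<sigma> (Node (last p)) = Exit (last p)"
  shows "even (min (Min (\<omega> ` set p)) (rew_threshold (best_exit_prio (last p)))) = i"
proof -
  have ne: "p \<noteq> []" "set p \<subseteq> V" using p(1) unfolding conforming_def by auto
  have "hd (exit_cycle p) = start"
    using exit_cycle_nth(1)[of 0 p] ne hd_conv_nth[of "exit_cycle p"] unfolding exit_cycle_def
      by simp
  then have "even (Min (aux_prio ` set (exit_cycle p))) = i"
    using H.wins_from_cycle[OF _ _ exit_cycle_in_aux_nodes[OF ne p(4)]] win
      exit_cycle_step[OF strat p steps exit] unfolding exit_cycle_def by auto
  then show ?thesis using aux_prio_exit_cycle[OF p(2,5)] ne by (simp add: Min_insert min.commute)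
qed

end

locale aux_game_diamond_wins = aux_game V Vd U E \<omega> v \<pi>
  for V Vd U :: "'v set" and E \<omega> v \<pi> +
  fixes \<sigma> :: "'v aux_node \<Rightarrow> 'v aux_node"
  assumes \<sigma>_strategy: "H.strategy aux_nodes True \<sigma>"
    and \<sigma>_wins: "H.wins_from aux_nodes True \<sigma> start"
begin

definition move :: "'v \<Rightarrow> 'v option" where
  "move w = (case \<sigma> (Node w) of Node w' \<Rightarrow> Some w' | _ \<Rightarrow> None)"

text \<open>\<open>move\<close> read as a strategy on histories, restricted to the histories it can produce,
  as the definition of a partial strategy demands.\<close>

definition \<rho> :: "'v list \<Rightarrow> 'v option" where
  "\<rho> p = (if conforming V Vd E (\<lambda>q. move (last q)) p \<and> hd p = v \<and> last p \<in> Vd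
    then move (last p) else None)"

lemma \<sigma>_Node: "w \<in> Vd \<Longrightarrow> \<sigma> (Node w) \<in> aux_succ (Node w)"
proof -
  assume "w \<in> Vd"
  moreover from this have "Node w \<in> aux_nodes" using Vd_subset unfolding aux_nodes_def by blast
  ultimately show ?thesis using \<sigma>_strategy unfolding H.strategy_def
    by (metis IntD1 aux_diamond.simps(1))
qed

lemma conforming_\<rho>_iff: "hd p = v \<Longrightarrow> conforming V Vd E \<rho> p \<longleftrightarrow> conforming V Vd E (\<lambda>q. move (last q)) p"
proof (induction p rule: rev_induct)
  case (snoc x p)
  show ?case
  proof (cases "p = []")
    case False
    then have "hd p = v" using snoc.prems by simp
    then show ?thesis using snoc.IH conforming_snoc[OF False] unfolding \<rho>_def by auto
  qed simp
qed (simp add: conforming_def)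

lemma move_step:
  assumes c: "conforming V Vd E (\<lambda>q. move (last q)) (p @ [w])" and p: "p \<noteq> []" "hd p = v"
  shows "Node w \<in> aux_succ (position p) \<and> (aux_diamond (position p) \<longrightarrow> \<sigma> (position p) = Node w)"
proof -
  have "(last p, w) \<in> E" "last p \<in> Vd \<longrightarrow> move (last p) = Some w"
    using c conforming_snoc[OF p(1)] by auto
  then show ?thesis
    using Node_in_aux_succ_position[OF p] aux_diamond_position[OF p] position_Vd[OF p]
    unfolding move_def by (auto split: aux_node.splits)
qed

lemma move_step_take:
  assumes c: "conforming V Vd E (\<lambda>q. move (last q)) p" and p: "hd p = v" "Suc k < length p"
    and "aux_diamond (position (take (Suc k) p))"
  shows "\<sigma> (position (take (Suc k) p)) = Node (p ! Suc k)"
proof -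
  have "take (Suc (Suc k)) p = take (Suc k) p @ [p ! Suc k]" using p(2)
    by (simp add: take_Suc_conv_app_nth)
  moreover have "conforming V Vd E (\<lambda>q. move (last q)) (take (Suc (Suc k)) p)"
    using conforming_take[OF c] by simp
  moreover have "take (Suc k) p \<noteq> []" "hd (take (Suc k) p) = v" using p by (cases p; simp)+
  ultimately show ?thesis using move_step assms(4) by metis
qed

lemma wins_from_position:
  "conforming V Vd E (\<lambda>q. move (last q)) p \<Longrightarrow> hd p = v \<Longrightarrow> H.wins_from aux_nodes True \<sigma> (position p)"
proof (induction p rule: rev_induct)
  case (snoc x p)
  show ?case
  proof (cases "p = []")
    case True
    then show ?thesis using \<sigma>_wins unfolding position_def by simp
  next
    case False
    have p: "hd p = v" "conforming V Vd E (\<lambda>q. move (last q)) p"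
      using snoc.prems conforming_snoc[OF False] False by auto
    have "position p \<in> aux_nodes" using position_in_aux_nodes False p(2) unfolding conforming_def
      by blast
    then show ?thesis
      using H.wins_from_step[OF snoc.IH[OF p(2,1)]] move_step[OF snoc.prems(1) False p(1)]
        position_snoc[OF False] by auto
  qed
qed (simp add: conforming_def)

lemma not_moving_to_Lost:
  assumes "H.wins_from aux_nodes True \<sigma> x" "x \<in> aux_nodes" "Lost \<in> aux_succ x"
    "aux_diamond x \<longrightarrow> \<sigma> x = Lost"
  shows False
proof -
  have "Lost \<in> aux_nodes" unfolding aux_nodes_def by blast
  then show False using H.wins_from_self_loop[OF assms(1-3)] assms(4) by simp
qed

lemma move_None:
  assumes "w \<in> Vd" "H.wins_from aux_nodes True \<sigma> (Node w)" "move w = None"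
  shows "w \<in> U \<and> \<sigma> (Node w) = Exit w"
proof -
  have "\<sigma> (Node w) \<in> aux_succ (Node w)" "\<forall>w'. \<sigma> (Node w) \<noteq> Node w'"
    using \<sigma>_Node[OF assms(1)] assms(3) unfolding move_def by (auto split: aux_node.splits)
  then have "\<sigma> (Node w) = Lost \<or> (w \<in> U \<and> \<sigma> (Node w) = Exit w)"
    using assms(1) by (auto simp: dead_end_sink_def split: if_splits)
  moreover have "Node w \<in> aux_nodes" using assms(1) Vd_subset unfolding aux_nodes_def by blast
  ultimately show ?thesis using not_moving_to_Lost[OF assms(2)] \<sigma>_Node[OF assms(1)] assms(1)
    by force
qed

lemma positional_\<rho>: "positional \<rho>"
  unfolding positional_def \<rho>_def by (auto split: if_splits)

lemma partial_strategy_\<rho>: "partial_strategy V Vd E U \<rho> v"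
  unfolding partial_strategy_def
proof (intro conjI)
  show "\<forall>p\<in>dom \<rho>. p \<noteq> [] \<and> hd p = v \<and> conforming V Vd E \<rho> (p @ [the (\<rho> p)]) \<and> last p \<in> Vd"
  proof
    fix p assume "p \<in> dom \<rho>"
    then obtain w where c: "conforming V Vd E (\<lambda>q. move (last q)) p" and p: "hd p = v" "last p \<in> Vd"
      and w: "move (last p) = Some w" "\<rho> p = Some w"
      unfolding \<rho>_def by (auto split: if_splits)
    have ne: "p \<noteq> []" using c unfolding conforming_def by blast
    have "\<sigma> (Node (last p)) = Node w" using w(1) unfolding move_def by (auto split: aux_node.splits)
    then have "Node w \<in> aux_succ (Node (last p))" using \<sigma>_Node[OF p(2)] by metis
    then have "(last p, w) \<in> E" using Node_in_aux_succ_Node by blast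
    then have "conforming V Vd E (\<lambda>q. move (last q)) (p @ [w])"
      using c w(1) E_subset conforming_snoc[OF ne] by auto
    then show "p \<noteq> [] \<and> hd p = v \<and> conforming V Vd E \<rho> (p @ [the (\<rho> p)]) \<and> last p \<in> Vd"
      using conforming_\<rho>_iff[of "p @ [w]"] ne p w(2) by simp
  qed
  show "\<forall>p. conforming V Vd E \<rho> p \<and> hd p = v \<and> last p \<in> Vd - U \<longrightarrow> p \<in> dom \<rho>"
  proof (intro allI impI)
    fix p assume a: "conforming V Vd E \<rho> p \<and> hd p = v \<and> last p \<in> Vd - U"
    then have c: "conforming V Vd E (\<lambda>q. move (last q)) p" using conforming_\<rho>_iff by blast
    then have "p \<noteq> []" unfolding conforming_def by blast
    then have "H.wins_from aux_nodes True \<sigma> (Node (last p))"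
      using wins_from_position[OF c] position_Vd a by force
    then have "move (last p) \<noteq> None" using move_None a by blast
    then show "p \<in> dom \<rho>" using a c unfolding \<rho>_def by auto
  qed
qed

lemma \<rho>_wins_infinite_plays:
  assumes F: "\<forall>n>0. conforming V Vd E \<rho> (map F [0..<n])" "F 0 = v"
  shows "even (LEAST q. \<exists>\<^sub>\<infinity>n. \<omega> (F n) = q)"
proof -
  define f where "f n = position (map F [0..<Suc n])" for n
  have hd: "hd (map F [0..<Suc n]) = v" for n using F(2) by (simp del: upt_Suc add: hd_map)
  have c: "conforming V Vd E (\<lambda>q. move (last q)) (map F [0..<Suc n])" for n
    using F(1) conforming_\<rho>_iff[OF hd] by blast
  have step: "f (Suc n) \<in> aux_succ (f n) \<and> (aux_diamond (f n) \<longrightarrow> \<sigma> (f n) = f (Suc n))" for n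
  proof -
    have "map F [0..<Suc (Suc n)] = map F [0..<Suc n] @ [F (Suc n)]" by simp
    then show ?thesis
      using move_step[of "map F [0..<Suc n]" "F (Suc n)"] c[of "Suc n"] hd position_snoc
      unfolding f_def by (simp del: upt_Suc)
  qed
  have "H.play aux_nodes f"
    unfolding H.play_def f_def using step position_in_aux_nodes c unfolding conforming_def f_def
      by blast
  moreover have "H.conforms True \<sigma> f" unfolding H.conforms_def using step by auto
  moreover have "f 0 = start" unfolding f_def position_def by simp
  ultimately have "H.winning_play True f" using \<sigma>_wins unfolding H.wins_from_def by blast
  moreover have "aux_prio (f n) = \<omega> (F n)" for n
    using aux_prio_position[of "map F [0..<Suc n]"] hd unfolding f_def by simp
  ultimately show ?thesis unfolding H.winning_play_def by simp
qed

lemma \<rho>_exits: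
  assumes p: "conforming V Vd E \<rho> p" "hd p = v" "length p > 1" "last p \<in> U" "p \<notin> dom \<rho>"
  shows "aux_diamond (Node (last p)) \<Longrightarrow> \<sigma> (Node (last p)) = Exit (last p)"
    and "exit_prios (last p) \<noteq> {}"
proof -
  have c: "conforming V Vd E (\<lambda>q. move (last q)) p" using conforming_\<rho>_iff p by blast
  have "position p = Node (last p)" using p(3) unfolding position_def by simp
  then have win: "H.wins_from aux_nodes True \<sigma> (Node (last p))" using wins_from_position[OF c p(2)]
    by simp
  show exit: "\<sigma> (Node (last p)) = Exit (last p)" if "aux_diamond (Node (last p))"
  proof -
    have "last p \<in> Vd" using that by simp
    moreover have "\<rho> p = None" using p(5) by blast
    ultimately have "move (last p) = None" using c p(2) unfolding \<rho>_def by (simp split: if_splits)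
    then show ?thesis using move_None[OF \<open>last p \<in> Vd\<close> win] by blast
  qed
  have u: "Node (last p) \<in> aux_nodes" "Exit (last p) \<in> aux_nodes"
    "Exit (last p) \<in> aux_succ (Node (last p))"
    using p(4) U_subset unfolding aux_nodes_def by auto
  show "exit_prios (last p) \<noteq> {}"
  proof
    assume "exit_prios (last p) = {}"
    moreover have "aux_diamond (Node (last p)) = True \<longrightarrow> Exit (last p) = \<sigma> (Node (last p))"
      using exit by auto
    then have "H.wins_from aux_nodes True \<sigma> (Exit (last p))" using H.wins_from_step[OF win u(1,3)]
      by blast
    ultimately show False using not_moving_to_Lost[of "Exit (last p)"] u(2) by simp
  qed
qed

lemma profile_\<rho>_le: "profile_le (profile V Vd E \<omega> U \<rho> v) (profile V Vd E \<omega> U \<pi> v)"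
  unfolding profile_le_def
proof (intro ballI, clarify)
  fix u q assume "(u, q) \<in> profile V Vd E \<omega> U \<rho> v"
  then obtain p where p: "u = last p" "q = Min (\<omega> ` set p)" "length p > 1"
      "conforming V Vd E \<rho> p" "hd p = v" "last p \<in> U" "p \<notin> dom \<rho>"
    unfolding profile_def preprofile_def by blast
  have c: "conforming V Vd E (\<lambda>q. move (last q)) p" using conforming_\<rho>_iff p by blast
  have "even (min q (rew_threshold (best_exit_prio u))) = True"
    using exit_cycle_parity[OF \<sigma>_wins \<sigma>_strategy p(4,5,3,6) \<rho>_exits(2)[OF p(4,5,3,6,7)]]
      move_step_take[OF c p(5)] \<rho>_exits(1)[OF p(4,5,3,6,7)] p(1,2) by blast
  then have "rew_le q (best_exit_prio u)" using even_min_rew_threshold by simp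
  then show "\<exists>q'. (u, q') \<in> profile V Vd E \<omega> U \<pi> v \<and> rew_le q q'"
    using best_exit_prio_in_profile[OF \<rho>_exits(2)[OF p(4,5,3,6,7)]] p(1) by blast
qed

lemma partial_winning_\<rho>: "partial_winning V Vd E \<omega> U \<rho> v"
  using partial_winningI[OF partial_strategy_\<rho> \<rho>_wins_infinite_plays] .

end

locale aux_game_box_wins = aux_game V Vd U E \<omega> v \<pi>
  for V Vd U :: "'v set" and E \<omega> v \<pi> +
  fixes \<tau> :: "'v aux_node \<Rightarrow> 'v aux_node"
  assumes \<tau>_strategy: "H.strategy aux_nodes False \<tau>"
    and \<tau>_wins: "H.wins_from aux_nodes False \<tau> start"
begin

text \<open>\<open>\<pi>\<close> playing against \<open>\<tau>\<close>: the history grows as long as the next node of the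
  auxiliary game is a node of the original game.\<close>

definition next_node :: "'v list \<Rightarrow> 'v aux_node" where
  "next_node h = (if last h \<in> Vd then (case \<pi> h of Some w \<Rightarrow> Node w | None \<Rightarrow> Exit (last h))
    else \<tau> (position h))"

primrec history :: "nat \<Rightarrow> 'v list" where
  "history 0 = [v]"
| "history (Suc n) = (case next_node (history n) of Node w \<Rightarrow> history n @ [w] | _ \<Rightarrow> history n)"

lemma next_node_step:
  assumes c: "conforming V Vd E \<pi> h" and hd: "hd h = v"
  shows "next_node h \<in> aux_succ (position h) \<and>
    (\<not> aux_diamond (position h) \<longrightarrow> next_node h = \<tau> (position h))"
proof -
  have ne: "h \<noteq> []" using c unfolding conforming_def by blast
  show ?thesis
  proof (cases "last h \<in> Vd")
    case True
    have pos: "position h = Node (last h)" using position_Vd[OF ne hd True] .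
    show ?thesis
    proof (cases "\<pi> h")
      case (Some w)
      then have "(last h, w) \<in> E"
        using partial_strategy_SomeD[of V Vd E U \<pi> v h w] \<pi>_winning conforming_snoc[OF ne]
        unfolding partial_winning_def by blast
      then show ?thesis using True Some pos unfolding next_node_def by simp
    next
      case None
      then have "last h \<in> U"
        using partial_strategy_defined[of V Vd E U \<pi> v h] \<pi>_winning c hd True
        unfolding partial_winning_def by blast
      then show ?thesis using True None pos unfolding next_node_def by simp
    qed
  next
    case False
    have "position h \<in> aux_nodes" using position_in_aux_nodes ne c unfolding conforming_def by blast
    moreover have "\<not> aux_diamond (position h)" using aux_diamond_position[OF ne hd] False by blast
    ultimately show ?thesis using \<tau>_strategy False unfolding H.strategy_def next_node_def by simp
  qed
qed

lemma next_node_conforming: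
  assumes c: "conforming V Vd E \<pi> h" and hd: "hd h = v" and n: "next_node h = Node w"
  shows "conforming V Vd E \<pi> (h @ [w])"
proof -
  have ne: "h \<noteq> []" using c unfolding conforming_def by blast
  have "(last h, w) \<in> E" using next_node_step[OF c hd] n Node_in_aux_succ_position[OF ne hd] by simp
  moreover have "last h \<in> Vd \<longrightarrow> \<pi> h = Some w" using n unfolding next_node_def
    by (auto split: option.splits)
  ultimately show ?thesis using conforming_snoc[OF ne] c E_subset by blast
qed

lemma history_conforming:
  assumes "\<And>j. j < k \<Longrightarrow> \<exists>w. next_node (history j) = Node w"
  shows "conforming V Vd E \<pi> (history k) \<and> hd (history k) = v \<and> length (history k) = Suc k \<and>
    (\<forall>j\<le>k. take (Suc j) (history k) = history j)"
  using assms
proof (induction k)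
  case (Suc k)
  then obtain w where w: "next_node (history k) = Node w" by blast
  have IH: "conforming V Vd E \<pi> (history k) \<and> hd (history k) = v \<and> length (history k) = Suc k \<and>
      (\<forall>j\<le>k. take (Suc j) (history k) = history j)" using Suc by simp
  then have "conforming V Vd E \<pi> (history (Suc k))" using next_node_conforming w by simp
  moreover have "take (Suc j) (history (Suc k)) = history j" if "j \<le> Suc k" for j
    using that IH w by (cases "j = Suc k") auto
  ultimately show ?case using IH w by (auto simp: hd_append)
qed (use v_in_V in simp)

lemma position_history_Suc:
  assumes "\<And>j. j \<le> k \<Longrightarrow> \<exists>w. next_node (history j) = Node w"
  shows "position (history (Suc k)) = next_node (history k)"
proof -
  obtain w where w: "next_node (history k) = Node w" using assms by blast
  have "history k \<noteq> []" using history_conforming[of k] assms unfolding conforming_def by force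
  then show ?thesis using w position_snoc by simp
qed

lemma history_stops: "\<exists>n. \<forall>w. next_node (history n) \<noteq> Node w"
proof (rule ccontr)
  assume "\<nexists>n. \<forall>w. next_node (history n) \<noteq> Node w"
  then have grows: "\<exists>w. next_node (history j) = Node w" for j by blast
  note h = history_conforming[OF grows]
  define F where "F n = last (history n)" for n
  have history_F: "history n = map F [0..<Suc n]" for n
  proof (rule nth_equalityI)
    fix j assume "j < length (history n)"
    then show "history n ! j = map F [0..<Suc n] ! j"
      using h[of n] last_take_Suc[of j "history n"] unfolding F_def by (simp del: upt_Suc)
  qed (use h in simp)
  define f where "f n = position (history n)" for n
  have step: "f (Suc n) \<in> aux_succ (f n) \<and> (\<not> aux_diamond (f n) \<longrightarrow> f (Suc n) = \<tau> (f n))" for n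
    using next_node_step h position_history_Suc grows unfolding f_def by metis
  have "H.play aux_nodes f"
    unfolding H.play_def using step position_in_aux_nodes h unfolding f_def conforming_def by metis
  moreover have "H.conforms False \<tau> f" unfolding H.conforms_def using step by simp
  moreover have "f 0 = start" unfolding f_def position_def by simp
  ultimately have "H.winning_play False f" using \<tau>_wins unfolding H.wins_from_def by blast
  moreover have "aux_prio (f n) = \<omega> (F n)" for n
    using aux_prio_position h unfolding f_def F_def conforming_def by metis
  moreover have "\<forall>n>0. conforming V Vd E \<pi> (map F [0..<n])"
    using h history_F by (metis Suc_pred)
  moreover have "F 0 = v" unfolding F_def by simp
  ultimately show False
    using partial_winning_infinite_play[OF \<pi>_winning] unfolding H.winning_play_def by simp
qed

lemma next_node_leaves:
  assumes c: "conforming V Vd E \<pi> h" and hd: "hd h = v" and stop: "\<forall>w. next_node h \<noteq> Node w"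
  shows "(next_node h = Won \<and> \<not> aux_diamond (position h)) \<or>
    (next_node h = Exit (last h) \<and> last h \<in> U \<and> length h > 1 \<and> h \<notin> dom \<pi>)"
proof -
  have ne: "h \<noteq> []" using c unfolding conforming_def by blast
  have succ: "next_node h \<in> aux_succ (position h)" using next_node_step[OF c hd] by blast
  have len1: "length h = 1 \<Longrightarrow> last h = v" using ne hd by (cases h) auto
  show ?thesis
  proof (cases "last h \<in> Vd")
    case True
    then have "next_node h = Exit (last h)" "h \<notin> dom \<pi>"
      using stop unfolding next_node_def by (auto split: option.splits)
    moreover have "last h \<in> U" using succ calculation(1) position_Vd[OF ne hd True]
      by (auto simp: dead_end_sink_def split: if_splits)
    moreover have "length h \<noteq> 1" using len1 True calculation(3) v_not_Vd_U by auto
    ultimately show ?thesis using ne by (simp add: Suc_lessI)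
  next
    case False
    then have "h \<notin> dom \<pi>"
      using partial_strategy_SomeD[of V Vd E U \<pi> v h] \<pi>_winning unfolding partial_winning_def
        by blast
    moreover have "\<not> aux_diamond (position h)" using aux_diamond_position[OF ne hd] False by blast
    moreover have "next_node h = Won \<or> (next_node h = Exit (last h) \<and> last h \<in> U \<and> length h > 1)"
      using succ stop False len1 ne Suc_lessI[of 0 "length h"] unfolding position_def start_def
      by (cases "length h = 1") (auto simp: dead_end_sink_def split: if_splits)
    ultimately show ?thesis by blast
  qed
qed

lemma wins_from_history:
  assumes "\<And>j. j < k \<Longrightarrow> \<exists>w. next_node (history j) = Node w"
  shows "H.wins_from aux_nodes False \<tau> (position (history k))"
  using assms
proof (induction k)
  case 0
  then show ?case using \<tau>_wins unfolding position_def by simp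
next
  case (Suc k)
  have h: "conforming V Vd E \<pi> (history k)" "hd (history k) = v" using history_conforming Suc.prems
    by auto
  then have "position (history k) \<in> aux_nodes"
    using position_in_aux_nodes unfolding conforming_def by blast
  then show ?case
    using H.wins_from_step[OF Suc.IH] next_node_step[OF h] position_history_Suc[of k] Suc.prems
      by auto
qed

definition stop_time :: nat where
  "stop_time = (LEAST n. \<forall>w. next_node (history n) \<noteq> Node w)"

lemma stops_at_stop_time: "\<forall>w. next_node (history stop_time) \<noteq> Node w"
  unfolding stop_time_def using history_stops by (rule LeastI_ex)

lemma grows_before_stop_time: "j < stop_time \<Longrightarrow> \<exists>w. next_node (history j) = Node w"
  unfolding stop_time_def using not_less_Least by blast

lemma final_history:
  "conforming V Vd E \<pi> (history stop_time) \<and> hd (history stop_time) = v \<and>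
    length (history stop_time) = Suc stop_time \<and>
    (\<forall>j\<le>stop_time. take (Suc j) (history stop_time) = history j)"
  using history_conforming grows_before_stop_time by blast

lemma \<tau>_follows_final_history:
  assumes "Suc k < length (history stop_time)"
    and "\<not> aux_diamond (position (take (Suc k) (history stop_time)))"
  shows "\<tau> (position (take (Suc k) (history stop_time))) = Node (history stop_time ! Suc k)"
proof -
  let ?h = "history stop_time"
  have k: "k < stop_time" using assms(1) final_history by simp
  then obtain w where w: "next_node (history k) = Node w" "history (Suc k) = history k @ [w]"
    using grows_before_stop_time by fastforce
  have "take (Suc (Suc k)) ?h = history k @ [w]" using final_history w(2) k by simp
  moreover have "length (history k) = Suc k" using history_conforming[of k] grows_before_stop_time k
    by auto
  ultimately have "?h ! Suc k = w" by (metis lessI nth_append_length nth_take)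
  moreover have "take (Suc k) ?h = history k" using final_history k by simp
  ultimately show ?thesis
    using assms(2) w next_node_step history_conforming[of k] grows_before_stop_time k by auto
qed

theorem box_cannot_win: False
proof -
  define h where "h = history stop_time"
  have h: "conforming V Vd E \<pi> h" "hd h = v" using final_history unfolding h_def by auto
  have win: "H.wins_from aux_nodes False \<tau> (position h)"
    using wins_from_history grows_before_stop_time unfolding h_def by blast
  have pos: "position h \<in> aux_nodes" using position_in_aux_nodes h(1) unfolding conforming_def
    by blast
  have step: "next_node h \<in> aux_succ (position h) \<and>
      (\<not> aux_diamond (position h) \<longrightarrow> next_node h = \<tau> (position h))"
    using next_node_step[OF h] .
  consider "next_node h = Won" "\<not> aux_diamond (position h)"
    | "next_node h = Exit (last h)" "last h \<in> U" "length h > 1" "h \<notin> dom \<pi>"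
    using next_node_leaves[OF h] stops_at_stop_time unfolding h_def by blast
  then show False
  proof cases
    case 1
    have "Won \<in> aux_nodes" "\<tau> Won = Won"
      using \<tau>_strategy unfolding H.strategy_def aux_nodes_def by auto
    then show False using H.wins_from_self_loop[OF win pos] step 1 by simp
  next
    case 2
    have "(last h, Min (\<omega> ` set h)) \<in> preprofile V Vd E \<omega> U \<pi> v"
      unfolding preprofile_def using 2 h by blast
    then have Q: "exit_prios (last h) \<noteq> {}" "Min (\<omega> ` set h) \<in> exit_prios (last h)"
      unfolding exit_prios_def by auto
    have "position h = Node (last h)" using 2(3) unfolding position_def by simp
    then have "even (min (Min (\<omega> ` set h)) (rew_threshold (best_exit_prio (last h)))) = False"
      using exit_cycle_parity[OF \<tau>_wins \<tau>_strategy h 2(3,2) Q(1)] \<tau>_follows_final_history step 2(1)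
      unfolding h_def by auto
    then show False using best_exit_prio(2)[OF Q] even_min_rew_threshold by simp
  qed
qed

end

text \<open>If \<open>v \<in> V\<^sub>\<Diamond> \<inter> U\<close>, \<open>\<Diamond>\<close> may stop at once by moving to \<open>\<top>\<close>.\<close>

lemma conforming_undefined_from_Vd:
  assumes "conforming V Vd E (\<lambda>_. None) p" "hd p \<in> Vd"
  shows "length p = 1"
proof (rule ccontr)
  assume "length p \<noteq> 1"
  moreover have "p \<noteq> []" using assms unfolding conforming_def by blast
  ultimately have "Suc 0 < length p" by (cases p) auto
  then show False using assms unfolding conforming_def by (auto simp: hd_conv_nth)
qed

lemma undefined_strategy_partial_winning:
  assumes "v \<in> Vd \<inter> U"
  shows "partial_winning V Vd E \<omega> U (\<lambda>_. None) v"
proof (rule partial_winningI)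
  show "partial_strategy V Vd E U (\<lambda>_. None) v"
    unfolding partial_strategy_def
    using conforming_undefined_from_Vd[of V Vd E] assms by (force simp: length_Suc_conv)
  fix F :: "nat \<Rightarrow> 'a" assume F: "\<forall>n>0. conforming V Vd E (\<lambda>_. None) (map F [0..<n])" "F 0 = v"
  have "conforming V Vd E (\<lambda>_. None) (map F [0..<2])" using F(1) by simp
  moreover have "hd (map F [0..<2]) \<in> Vd" using F(2) assms by (simp add: upt_rec)
  ultimately have "length (map F [0..<2]) = 1" by (rule conforming_undefined_from_Vd)
  then show "even (LEAST q. \<exists>\<^sub>\<infinity>n. \<omega> (F n) = q)" by simp
qed

lemma undefined_strategy_profile:
  assumes "v \<in> Vd"
  shows "profile V Vd E \<omega> U (\<lambda>_. None) v = {}"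
  using conforming_undefined_from_Vd[of V Vd E _] assms
  unfolding profile_def preprofile_def by fastforce

lemma undefined_strategy_solves:
  assumes "v \<in> Vd \<inter> U"
  shows "positional (\<lambda>_. None) \<and> partial_winning V Vd E \<omega> U (\<lambda>_. None) v \<and>
    profile_le (profile V Vd E \<omega> U (\<lambda>_. None) v) y"
  using undefined_strategy_partial_winning[OF assms] undefined_strategy_profile[of v Vd] assms
  unfolding positional_def profile_le_def by simp

theorem lemma3p22:
  fixes V Vd U :: "'v set" and E :: "('v \<times> 'v) set" and \<omega> :: "'v \<Rightarrow> nat"
    and v :: 'v and \<pi> :: "'v list \<Rightarrow> 'v option"
  assumes "finite V" and "Vd \<subseteq> V" and "E \<subseteq> V \<times> V" and "U \<subseteq> V" and "v \<in> V"
    and "partial_winning V Vd E \<omega> U \<pi> v"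
  shows "\<exists>\<rho>. positional \<rho> \<and> partial_winning V Vd E \<omega> U \<rho> v \<and>
              profile_le (profile V Vd E \<omega> U \<rho> v) (profile V Vd E \<omega> U \<pi> v)"
proof (cases "v \<in> Vd \<inter> U")
  case True
  then show ?thesis
    using undefined_strategy_solves[OF True, where y = "profile V Vd E \<omega> U \<pi> v"] by blast
next
  case False
  interpret aux_game V Vd U E \<omega> v \<pi> using assms False by unfold_locales
  obtain \<sigma> where "H.winning_strategies aux_nodes \<sigma>"
    using H.positional_determinacy[OF finite_aux_nodes aux_no_dead_ends] by blast
  then obtain i where i: "H.strategy aux_nodes i (\<sigma> i)" "H.wins_from aux_nodes i (\<sigma> i) start"
    using start_in_aux_nodes unfolding H.winning_strategies_def by blast
  show ?thesis
  proof (cases i)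
    case True
    interpret aux_game_diamond_wins V Vd U E \<omega> v \<pi> "\<sigma> True"
      using i True by unfold_locales auto
    show ?thesis using positional_\<rho> partial_winning_\<rho> profile_\<rho>_le by blast
  next
    case False
    interpret aux_game_box_wins V Vd U E \<omega> v \<pi> "\<sigma> False"
      using i False by unfold_locales auto
    show ?thesis using box_cannot_win ..
  qed
qed

end
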